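(* Let $r\ge3$ be odd and work with coefficients in $\mathbb{Z}[1/\tilde r!]$. The linear map $\Phi\colon\mathrm{N}(\partial\triangle_+^{r-1})\to\overline{W}_*(r)$ defined below is a chain map.
   Context: $\tilde r=(r-1)/2$. $\mathbb{C}_r=\langle\rho\mid\rho^r\rangle$ is identified with $\{0,\dots,r-1\}$ (addition mod $r$); $N=\sum_j\rho^j$, $T=\rho-1$. $\mathrm{N}(\partial\triangle_+^{r-1})$: free module on symbols $[a_0,\dots,a_{q-1}]$ with distinct entries in $\{0,\dots,r-1\}$, $0\le q\le r-1$, in degree $q$ (the empty symbol $\emptyset$ in degree $0$), with $[a_{\pi(0)},\dots,a_{\pi(q-1)}]=(-1)^{\mathrm{sgn}\,\pi}[a_0,\dots,a_{q-1}]$ and $\partial[a_0,\dots,a_{q-1}]=\sum_i(-1)^i[a_0,\dots,\widehat{a_i},\dots,a_{q-1}]$. $\overline{W}_*(r)$: degree $0$ is the free module on $e_0$ with trivial $\mathbb{C}_r$-action; degree $q\ge1$ is the free $R[\mathbb{C}_r]$-module on $e_q$; $\partial(\rho^je_1)=e_0$, and for $q\ge2$, $\partial e_q=Te_{q-1}$ if $q$ is even, $\partial e_q=Ne_{q-1}$ if $q$ is odd. For $a,b\in\{0,\dots,r-1\}$ let $d(a,b)\in\{1,\dots,r\}$ be the integer congruent to $b-a$ mod $r$. A sequence $(a_0,\dots,a_{q-1})$ of distinct elements, $q\ge1$, is cyclically ordered if $\sum_{i=0}^{q-1}d(a_i,a_{i+1})=r$, where $a_q:=a_0$. Then $a_i$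 is called even (resp. odd) in the sequence if $d(a_i,a_{i+1})$ is even (resp. odd). Set $\phi_e(a,b)=\sum_{i=1}^{d(a,b)/2}\rho^{a+2i}$ if $d(a,b)$ is even, $0$ otherwise; $\phi_o(a,b)=\sum_{i=1}^{(d(a,b)-1)/2}\rho^{a+2i+1}$ if $d(a,b)$ is odd, $0$ otherwise. For a cyclically ordered sequence $A=(a_0,\dots,a_{q-1})$: $\Phi_e(A)=(-1)^{j+1}\phi_e(a_j,a_{j+1})e_q$ if $A$ has exactly one even entry $a_j$, and $0$ otherwise; $\Phi_o(A)=\sum_{j=0}^{q-1}\phi_o(a_j,a_{j+1})e_q$ if $A$ has no even entry, and $0$ otherwise. With $\varphi(q)=\lfloor(r-q-1)/2\rfloor$, set $\Phi(\emptyset)=e_0$, $\Phi(A)=\frac{\varphi(q)!}{\tilde r!}\Phi_e(A)$ for $q\ge2$ even, and $\Phi(A)=\frac{\varphi(q)!}{\tilde r!}\Phi_o(A)$ for $q$ odd. On a generator $[a_0,\dots,a_{q-1}]$, $\Phi$ is defined as $(-1)^{\mathrm{sgn}\,\pi}\Phi(a_{\pi(0)},\dots,a_{\pi(q-1)})$ for any permutation $\pi$ making $(a_{\pi(0)},\dots,a_{\pi(q-1)})$ cyclically ordered (the paper asserts this is independent of the choice), and extended linearly. *)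

theory Defs
  imports Complex_Main "HOL-Combinatorics.Permutations"
begin

text \<open>Coefficients: Z[1/rt!] is realised inside the rationals.
  An element of the group ring R[C_r] (i.e. of Wbar_q, q >= 1, written in the basis
  rho^j e_q, 0 <= j < r) is a function nat => rat, supported on {..<r}, giving the
  coefficient of rho^j.  Wbar_0 = R e_0 is encoded as the multiples of the indicator of 0.\<close>

definition rt :: "nat \<Rightarrow> nat" where
  "rt r = (r - 1) div 2"

definition grp_rho :: "nat \<Rightarrow> nat \<Rightarrow> nat \<Rightarrow> rat" where
  "grp_rho r a = (\<lambda>j. if j = a mod r then 1 else 0)"

definition scale :: "rat \<Rightarrow> (nat \<Rightarrow> rat) \<Rightarrow> nat \<Rightarrow> rat" where
  "scale c x = (\<lambda>j. c * x j)"

definition dd :: "nat \<Rightarrow> nat \<Rightarrow> nat \<Rightarrow> nat" where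
  "dd r a b = (if (b + r - a) mod r = 0 then r else (b + r - a) mod r)"

definition cyc_next :: "nat \<Rightarrow> nat list \<Rightarrow> nat \<Rightarrow> nat" where
  "cyc_next r A i = dd r (A ! i) (A ! ((i + 1) mod length A))"

definition cyclically_ordered :: "nat \<Rightarrow> nat list \<Rightarrow> bool" where
  "cyclically_ordered r A \<longleftrightarrow> A \<noteq> [] \<and> distinct A \<and>
     (\<Sum>i<length A. cyc_next r A i) = r"

definition even_entry :: "nat \<Rightarrow> nat list \<Rightarrow> nat \<Rightarrow> bool" where
  "even_entry r A i \<longleftrightarrow> i < length A \<and> even (cyc_next r A i)"

definition phi_e :: "nat \<Rightarrow> nat \<Rightarrow> nat \<Rightarrow> nat \<Rightarrow> rat" where
  "phi_e r a b = (if even (dd r a b)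
     then (\<lambda>k. \<Sum>i=1..dd r a b div 2. grp_rho r (a + 2 * i) k) else (\<lambda>_. 0))"

definition phi_o :: "nat \<Rightarrow> nat \<Rightarrow> nat \<Rightarrow> nat \<Rightarrow> rat" where
  "phi_o r a b = (if odd (dd r a b)
     then (\<lambda>k. \<Sum>i=1..(dd r a b - 1) div 2. grp_rho r (a + 2 * i + 1) k) else (\<lambda>_. 0))"

definition Phi_e :: "nat \<Rightarrow> nat list \<Rightarrow> nat \<Rightarrow> rat" where
  "Phi_e r A = (if card {j. even_entry r A j} = 1
     then (let j = (THE j. even_entry r A j) in
           scale ((-1) ^ (j + 1)) (phi_e r (A ! j) (A ! ((j + 1) mod length A))))
     else (\<lambda>_. 0))"

definition Phi_o :: "nat \<Rightarrow> nat list \<Rightarrow> nat \<Rightarrow> rat" where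
  "Phi_o r A = (if (\<forall>j. \<not> even_entry r A j)
     then (\<lambda>k. \<Sum>j<length A. phi_o r (A ! j) (A ! ((j + 1) mod length A)) k)
     else (\<lambda>_. 0))"

definition varphi :: "nat \<Rightarrow> nat \<Rightarrow> nat" where
  "varphi r q = (r - q - 1) div 2"

definition e0 :: "nat \<Rightarrow> nat \<Rightarrow> rat" where
  "e0 r = grp_rho r 0"

definition Phi_cyc :: "nat \<Rightarrow> nat list \<Rightarrow> nat \<Rightarrow> rat" where
  "Phi_cyc r A = (if A = [] then e0 r
     else scale (of_nat (fact (varphi r (length A))) / of_nat (fact (rt r)))
       (if even (length A) then Phi_e r A else Phi_o r A))"

definition permute_list_by :: "(nat \<Rightarrow> nat) \<Rightarrow> nat list \<Rightarrow> nat list" where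
  "permute_list_by p a = map (\<lambda>i. a ! p i) [0..<length a]"

definition Phi :: "nat \<Rightarrow> nat list \<Rightarrow> nat \<Rightarrow> rat" where
  "Phi r a = (if a = [] then e0 r else
     (let p = (SOME p. p permutes {..<length a} \<and>
                       cyclically_ordered r (permute_list_by p a))
      in scale (of_int (sign p)) (Phi_cyc r (permute_list_by p a))))"

definition Phi_of_boundary :: "nat \<Rightarrow> nat list \<Rightarrow> nat \<Rightarrow> rat" where
  "Phi_of_boundary r a =
     (\<lambda>k. \<Sum>i<length a. (-1) ^ i * Phi r (take i a @ drop (Suc i) a) k)"

definition bdW :: "nat \<Rightarrow> nat \<Rightarrow> (nat \<Rightarrow> rat) \<Rightarrow> nat \<Rightarrow> rat" where
  "bdW r q x =
     (if q = 0 then (\<lambda>_. 0)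
      else if q = 1 then (\<lambda>j. if j = 0 then (\<Sum>k<r. x k) else 0)
      else if even q then (\<lambda>j. if j < r then x ((j + r - 1) mod r) - x j else 0)
      else (\<lambda>j. if j < r then (\<Sum>k<r. x k) else 0))"

end

theory Submission
  imports Defs "HOL-Combinatorics.Cycles"
begin

lemma add_mod_cancel_left:
  fixes n :: nat
  assumes "x < n" "y < n" "(m + x) mod n = (m + y) mod n"
  shows "x = y"
proof -
  have "x = y" if "x \<le> y" "y < n" "(m + x) mod n = (m + y) mod n" for x y
  proof -
    have "n dvd y - x" using that mod_eq_dvd_iff_nat[of "m + x" "m + y" n] by simp
    moreover have "y - x < n" using that by simp
    ultimately have "y - x = 0" by (metis nat_dvd_not_less neq0_conv)
    then show ?thesis using that by simp
  qed
  then show ?thesis using assms by (metis nat_le_linear)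
qed

lemma bij_betw_add_mod: "bij_betw (\<lambda>i. (m + i) mod n) {..<n} {..<n::nat}"
proof (cases "n = 0")
  case False
  have "inj_on (\<lambda>i. (m + i) mod n) {..<n}"
    by (rule inj_onI) (auto intro: add_mod_cancel_left)
  moreover have "(\<lambda>i. (m + i) mod n) ` {..<n} \<subseteq> {..<n}" using False by auto
  ultimately show ?thesis by (simp add: bij_betw_def endo_inj_surj)
qed simp

lemma sum_add_mod:
  fixes f :: "nat \<Rightarrow> 'a::comm_monoid_add"
  shows "(\<Sum>i<n. f ((m + i) mod n)) = (\<Sum>i<n. f i)"
  using sum.reindex_bij_betw[OF bij_betw_add_mod] .

lemma periodic_mod:
  fixes f :: "nat \<Rightarrow> 'a"
  assumes "\<And>x. f (x + n) = f x"
  shows "f (x mod n) = f x"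
proof -
  have "f (y + n * k) = f y" for y k
  proof (induction k)
    case (Suc k)
    have "y + n * Suc k = (y + n * k) + n" by simp
    then show ?case using assms Suc.IH by metis
  qed simp
  from this[of "x mod n" "x div n"] show ?thesis by simp
qed

lemma sum_shift_periodic:
  fixes f :: "nat \<Rightarrow> 'a::comm_monoid_add"
  assumes "\<And>x. f (x + n) = f x"
  shows "(\<Sum>i<n. f (m + i)) = (\<Sum>i<n. f i)"
  using sum_add_mod[where f = f and n = n and m = m] periodic_mod[of f n, OF assms] by simp

lemma exists_add_mod_eq:
  assumes "(n::nat) > 0"
  obtains k where "k < n" "(m + k) mod n = x mod n"
proof -
  have "x mod n \<in> (\<lambda>i. (m + i) mod n) ` {..<n}"
    using bij_betw_add_mod[of m n] assms unfolding bij_betw_def by simp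
  then show ?thesis using that by auto
qed

lemma add_mod_eq_iff:
  fixes n :: nat
  shows "(m + x) mod n = (m + y) mod n \<longleftrightarrow> x mod n = y mod n"
proof
  assume eq: "(m + x) mod n = (m + y) mod n"
  show "x mod n = y mod n"
  proof (cases "n = 0")
    case False
    then show ?thesis using eq add_mod_cancel_left[of "x mod n" n "y mod n" m] by (simp add: mod_add_right_eq)
  qed (use eq in simp)
qed (metis mod_add_right_eq)

lemma mod_eq_iff_below_double:
  fixes s q :: nat
  assumes "s < 2 * q" "x < q"
  shows "s mod q = x \<longleftrightarrow> s = x \<or> s = q + x"
proof (cases "s < q")
  case True
  then show ?thesis using assms(2) by auto
next
  case False
  then have "s mod q = s - q" using assms(1) le_mod_geq[of q s] by simp
  then show ?thesis using False assms(2) by auto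
qed

lemma sum_split_first_two:
  assumes "2 \<le> n"
  shows "(\<Sum>i<n. f i) = f 0 + f 1 + (\<Sum>i<n - 2. f (Suc (Suc i)))"
proof -
  obtain m where "n = Suc (Suc m)" using assms by (metis add_2_eq_Suc le_Suc_ex)
  then show ?thesis unfolding \<open>n = Suc (Suc m)\<close> sum.lessThan_Suc_shift by (simp add: add.assoc)
qed

lemma pair_eq_shift_mod:
  fixes q :: nat
  assumes "x < q" "y < q" "x \<noteq> y" "q \<ge> 3"
  obtains u d where "u < q" "1 \<le> d" "d \<le> q - 2" "{x, y} = {u, (u + d) mod q}"
proof -
  have "\<exists>u d. u < q \<and> 1 \<le> d \<and> d \<le> q - 2 \<and> {x', y'} = {u, (u + d) mod q}"
    if "x' < y'" "y' < q" for x' y'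
  proof (cases "y' - x' \<le> q - 2")
    case True
    then show ?thesis using that by (intro exI[of _ x'] exI[of _ "y' - x'"]) auto
  next
    case False
    then have "x' = 0" "y' = q - 1" using that by auto
    moreover have "(q - 1 + 1) mod q = 0" using that by simp
    ultimately show ?thesis using assms(4) that by (intro exI[of _ "q - 1"] exI[of _ 1]) auto
  qed
  then show ?thesis using that assms by (metis insert_commute linorder_neqE_nat)
qed

lemma dd_eq_if: "a < r \<Longrightarrow> b < r \<Longrightarrow> dd r a b = (if a < b then b - a else r + b - a)"
  by (auto simp: dd_def mod_if)

lemma dd_ge_1: "a < r \<Longrightarrow> b < r \<Longrightarrow> 1 \<le> dd r a b"
  by (auto simp: dd_eq_if)

lemma add_dd_mod: "a < r \<Longrightarrow> b < r \<Longrightarrow> (a + dd r a b) mod r = b"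
  by (auto simp: dd_eq_if)

lemma dd_eqI: "a < r \<Longrightarrow> b < r \<Longrightarrow> 1 \<le> n \<Longrightarrow> n \<le> r \<Longrightarrow> (a + n) mod r = b \<Longrightarrow> dd r a b = n"
  by (auto simp: dd_def mod_if split: if_splits)

lemma nth_rotate1_cyclic_pair:
  assumes "j < length A"
  shows "rotate1 A ! j = A ! (Suc j mod length A)"
    and "rotate1 A ! (Suc j mod length A) = A ! (Suc (Suc j mod length A) mod length A)"
proof -
  have "0 < length A" using assms by linarith
  then show "rotate1 A ! j = A ! (Suc j mod length A)"
    and "rotate1 A ! (Suc j mod length A) = A ! (Suc (Suc j mod length A) mod length A)"
    using assms by (simp_all add: nth_rotate1)
qed

lemma cyc_next_rotate1:
  "i < length A \<Longrightarrow> cyc_next r (rotate1 A) i = cyc_next r A (Suc i mod length A)"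
  unfolding cyc_next_def by (simp add: nth_rotate1_cyclic_pair)

lemma sum_Suc_mod:
  fixes f :: "nat \<Rightarrow> 'a::comm_monoid_add"
  shows "(\<Sum>i<n. f (Suc i mod n)) = (\<Sum>i<n. f i)"
  using sum_add_mod[where m = 1 and f = f and n = n] by simp

lemma cyclically_ordered_rotate1:
  assumes "cyclically_ordered r A"
  shows "cyclically_ordered r (rotate1 A)"
proof -
  have "(\<Sum>i<length A. cyc_next r (rotate1 A) i) = (\<Sum>i<length A. cyc_next r A (Suc i mod length A))"
    by (intro sum.cong) (auto simp: cyc_next_rotate1)
  also have "\<dots> = (\<Sum>i<length A. cyc_next r A i)" by (rule sum_Suc_mod)
  finally show ?thesis using assms unfolding cyclically_ordered_def by simp
qed

lemma cyclically_ordered_rotate: "cyclically_ordered r A \<Longrightarrow> cyclically_ordered r (rotate n A)"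
  by (induction n) (auto simp: cyclically_ordered_rotate1)

lemma even_entry_rotate1:
  "even_entry r (rotate1 A) j \<longleftrightarrow> j < length A \<and> even_entry r A (Suc j mod length A)"
  by (cases "A = []") (auto simp: even_entry_def cyc_next_rotate1)

lemma bij_betw_even_entry_rotate1:
  "bij_betw (\<lambda>j. Suc j mod length A) {j. even_entry r (rotate1 A) j} {j. even_entry r A j}"
proof -
  have "bij_betw (\<lambda>j. Suc j mod length A)
      {j \<in> {..<length A}. even_entry r A (Suc j mod length A)} {j \<in> {..<length A}. even_entry r A j}"
    using bij_betw_Collect[OF bij_betw_add_mod[where m = 1]] by simp
  moreover have "{j \<in> {..<length A}. even_entry r A (Suc j mod length A)} = {j. even_entry r (rotate1 A) j}"
    by (auto simp: even_entry_rotate1)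
  moreover have "{j \<in> {..<length A}. even_entry r A j} = {j. even_entry r A j}"
    by (auto simp: even_entry_def)
  ultimately show ?thesis by simp
qed

lemma Phi_e_eq_single:
  assumes "{j. even_entry r A j} = {j0}"
  shows "Phi_e r A = scale ((-1) ^ (j0 + 1)) (phi_e r (A ! j0) (A ! ((j0 + 1) mod length A)))"
proof -
  have "(THE j. even_entry r A j) = j0" using assms by (intro the_equality) auto
  then show ?thesis unfolding Phi_e_def using assms by (simp add: Let_def)
qed

lemma Phi_e_eq_0: "card {j. even_entry r A j} \<noteq> 1 \<Longrightarrow> Phi_e r A = (\<lambda>_. 0)"
  unfolding Phi_e_def by simp

lemma Phi_e_rotate1:
  assumes "even (length A)"
  shows "Phi_e r (rotate1 A) k = - Phi_e r A k"
proof -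
  let ?q = "length A"
  note bij = bij_betw_even_entry_rotate1[of A r]
  show ?thesis
  proof (cases "card {j. even_entry r (rotate1 A) j} = 1")
    case True
    then obtain j1 where S1: "{j. even_entry r (rotate1 A) j} = {j1}" by (rule card_1_singletonE)
    define j0 where "j0 = Suc j1 mod ?q"
    have S: "{j. even_entry r A j} = {j0}"
      using bij unfolding S1 bij_betw_def j0_def by simp
    have j1: "j1 < ?q" using S1 by (auto simp: even_entry_def)
    have "(-1::rat) ^ (j1 + 1) = - ((-1) ^ (j0 + 1))"
    proof (cases "j1 + 1 = ?q")
      case True
      then show ?thesis using assms by (simp add: j0_def)
    next
      case False
      then show ?thesis using j1 by (simp add: j0_def)
    qed
    then show ?thesis
      unfolding Phi_e_eq_single[OF S1] Phi_e_eq_single[OF S] scale_def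
      using nth_rotate1_cyclic_pair[OF j1] by (simp add: j0_def)
  next
    case False
    then show ?thesis using bij_betw_same_card[OF bij] by (simp add: Phi_e_eq_0)
  qed
qed

lemma Phi_o_rotate1: "Phi_o r (rotate1 A) k = Phi_o r A k"
proof -
  let ?q = "length A"
  let ?pair = "\<lambda>i. phi_o r (A ! i) (A ! ((i + 1) mod ?q)) k"
  have "{j. even_entry r (rotate1 A) j} = {} \<longleftrightarrow> {j. even_entry r A j} = {}"
    using bij_betw_even_entry_rotate1[of A r] unfolding bij_betw_def by auto
  then have iff: "(\<forall>j. \<not> even_entry r (rotate1 A) j) \<longleftrightarrow> (\<forall>j. \<not> even_entry r A j)" by auto
  have "(\<Sum>j<?q. phi_o r (rotate1 A ! j) (rotate1 A ! ((j + 1) mod ?q)) k) = (\<Sum>j<?q. ?pair (Suc j mod ?q))"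
    by (intro sum.cong) (simp_all add: nth_rotate1_cyclic_pair)
  also have "\<dots> = (\<Sum>j<?q. ?pair j)" by (rule sum_Suc_mod)
  finally show ?thesis unfolding Phi_o_def iff by (cases "\<forall>j. \<not> even_entry r A j") auto
qed

lemma Phi_cyc_rotate1:
  assumes "A \<noteq> []"
  shows "Phi_cyc r (rotate1 A) k = (-1) ^ (length A - 1) * Phi_cyc r A k"
proof (cases "even (length A)")
  case True
  then have "(-1::rat) ^ (length A - 1) = -1"
    using assms by (simp add: neg_one_odd_power)
  then show ?thesis using True assms Phi_e_rotate1[OF True, of r k]
    unfolding Phi_cyc_def scale_def by simp
next
  case False
  then show ?thesis using assms Phi_o_rotate1[of r A k]
    unfolding Phi_cyc_def scale_def by (simp add: neg_one_even_power)
qed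

lemma Phi_cyc_rotate:
  "A \<noteq> [] \<Longrightarrow> Phi_cyc r (rotate n A) k = (-1) ^ (n * (length A - 1)) * Phi_cyc r A k"
  by (induction n) (simp_all add: Phi_cyc_rotate1 power_add)

section \<open>Cyclically ordered sequences with the same entries are rotations of each other\<close>

definition cyclic_descents :: "nat list \<Rightarrow> nat set" where
  "cyclic_descents A = {i. i < length A \<and> A ! (Suc i mod length A) \<le> A ! i}"

lemma int_cyc_next:
  assumes "set A \<subseteq> {..<r}" "i < length A"
  shows "int (cyc_next r A i) =
    int (A ! (Suc i mod length A)) - int (A ! i) + (if i \<in> cyclic_descents A then int r else 0)"
proof -
  have "0 < length A" using assms(2) by linarith
  then have "A ! i \<in> set A" "A ! (Suc i mod length A) \<in> set A" using assms(2) by simp_all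
  then have "A ! i < r" "A ! (Suc i mod length A) < r" using assms(1) by auto
  then show ?thesis unfolding cyc_next_def cyclic_descents_def using assms(2) by (auto simp: dd_eq_if)
qed

lemma sum_cyc_next_eq_card_descents:
  assumes "set A \<subseteq> {..<r}"
  shows "int (\<Sum>i<length A. cyc_next r A i) = int r * int (card (cyclic_descents A))"
proof -
  let ?q = "length A"
  have "int (\<Sum>i<?q. cyc_next r A i) =
      (\<Sum>i<?q. int (A ! (Suc i mod ?q))) - (\<Sum>i<?q. int (A ! i)) +
      (\<Sum>i<?q. if i \<in> cyclic_descents A then int r else 0)"
    using assms by (simp add: int_cyc_next sum.distrib sum_subtractf)
  also have "(\<Sum>i<?q. int (A ! (Suc i mod ?q))) = (\<Sum>i<?q. int (A ! i))"
    by (rule sum_Suc_mod)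
  also have "(\<Sum>i<?q. if i \<in> cyclic_descents A then int r else 0) = (\<Sum>i\<in>cyclic_descents A. int r)"
    by (simp add: sum.If_cases cyclic_descents_def Int_def)
  finally show ?thesis by simp
qed

lemma cyclically_ordered_iff_one_descent:
  assumes "A \<noteq> []" "distinct A" "set A \<subseteq> {..<r}" "r > 0"
  shows "cyclically_ordered r A \<longleftrightarrow> card (cyclic_descents A) = 1"
  using sum_cyc_next_eq_card_descents[OF assms(3)] assms unfolding cyclically_ordered_def
  by (metis mult.right_neutral mult_cancel_left of_nat_1 of_nat_eq_iff of_nat_mult not_gr0)

lemma sorted_imp_cyclically_ordered:
  assumes "sorted_wrt (<) A" "A \<noteq> []" "set A \<subseteq> {..<r}"
  shows "cyclically_ordered r A"
proof -
  let ?q = "length A"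
  have "cyclic_descents A = {?q - 1}"
  proof -
    have "i \<in> cyclic_descents A \<longleftrightarrow> i = ?q - 1" for i
    proof (cases "Suc i < ?q")
      case True
      then show ?thesis using sorted_wrt_nth_less[OF assms(1) lessI True] by (auto simp: cyclic_descents_def)
    next
      case False
      have "A ! 0 \<le> A ! (?q - 1)"
        using assms(1,2) sorted_wrt_nth_less[OF assms(1), of 0 "?q - 1"]
        by (cases "?q = 1") (auto intro: less_imp_le)
      then show ?thesis using False assms(2) by (auto simp: cyclic_descents_def)
    qed
    then show ?thesis by auto
  qed
  moreover have "r > 0" using assms(2,3) by (cases A) auto
  moreover have "distinct A" using assms(1) strict_sorted_iff by blast
  ultimately show ?thesis using cyclically_ordered_iff_one_descent assms(2,3) by simp
qed

lemma cyclically_ordered_rotate_sorted: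
  assumes "cyclically_ordered r A" "set A \<subseteq> {..<r}"
  obtains n where "sorted_wrt (<) (rotate n A)"
proof -
  let ?q = "length A"
  have ne: "A \<noteq> []" and "distinct A" using assms unfolding cyclically_ordered_def by auto
  moreover have "r > 0" using assms ne by (cases A) auto
  ultimately have "card (cyclic_descents A) = 1"
    using cyclically_ordered_iff_one_descent assms by blast
  then obtain t where D: "cyclic_descents A = {t}" by (rule card_1_singletonE)
  then have t: "t < ?q" by (auto simp: cyclic_descents_def)
  have "rotate (Suc t) A ! i < rotate (Suc t) A ! Suc i" if "Suc i < ?q" for i
  proof -
    have "(t + Suc i) mod ?q \<noteq> (t + 0) mod ?q"
      using add_mod_cancel_left[of "Suc i" ?q 0 t] that ne by auto
    then have "(Suc t + i) mod ?q \<notin> cyclic_descents A" using D t by simp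
    moreover have "Suc ((Suc t + i) mod ?q) mod ?q = (Suc t + Suc i) mod ?q" by (simp add: mod_Suc_eq)
    moreover have "rotate (Suc t) A ! i = A ! ((Suc t + i) mod ?q)"
      by (rule nth_rotate) (use that in simp)
    moreover have "rotate (Suc t) A ! Suc i = A ! ((Suc t + Suc i) mod ?q)"
      by (rule nth_rotate) (use that in simp)
    ultimately show ?thesis using ne by (simp del: rotate_Suc add: cyclic_descents_def)
  qed
  then have "sorted_wrt (<) (rotate (Suc t) A)"
    by (simp add: sorted_wrt_iff_nth_Suc_transp transp_def)
  then show ?thesis by (rule that)
qed

lemma rotate_inverse: "rotate (length xs - n mod length xs) (rotate n xs) = xs"
proof (cases "xs = []")
  case False
  let ?L = "length xs"
  have "n mod ?L < ?L" "n mod ?L \<le> n" using False by simp_all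
  then have "?L - n mod ?L + n = ?L + (n - n mod ?L)" by linarith
  also have "\<dots> = ?L * Suc (n div ?L)" by (simp add: minus_mod_eq_mult_div)
  finally show ?thesis by (simp add: rotate_rotate)
qed simp

lemma cyclically_ordered_same_set_rotate:
  assumes "cyclically_ordered r A" "cyclically_ordered r A'" "set A = set A'" "set A \<subseteq> {..<r}"
  obtains m where "A' = rotate m A"
proof -
  obtain n where n: "sorted_wrt (<) (rotate n A)" using cyclically_ordered_rotate_sorted assms by blast
  obtain n' where n': "sorted_wrt (<) (rotate n' A')" using cyclically_ordered_rotate_sorted assms by metis
  have "rotate n' A' = rotate n A" using strict_sorted_equal[OF n n'] assms(3) by simp
  then have "A' = rotate (length A' - n' mod length A' + n) A"
    using rotate_inverse[of A' n'] by (simp add: rotate_rotate)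
  then show ?thesis by (rule that)
qed

section \<open>\<open>\<Phi>\<close> is alternating\<close>

lemma sign_cycle_of_list: "distinct cs \<Longrightarrow> sign (cycle_of_list cs) = (-1) ^ (length cs - 1)"
proof (induction cs rule: cycle_of_list.induct)
  case (1 i j cs)
  have "sign (cycle_of_list (i # j # cs)) = sign (transpose i j) * sign (cycle_of_list (j # cs))"
    by (simp add: sign_compose permutation_swap_id permutation_of_cycle)
  also have "\<dots> = - ((-1) ^ length cs)" using 1 by (simp add: sign_swap_id)
  finally show ?case by (simp del: cycle_of_list.simps)
qed simp_all

lemma sign_rotation_perm: "sign (cycle_of_list [0..<q] ^^ m) = (-1) ^ (m * (q - 1))"
proof (induction m)
  case (Suc m)
  have perm: "permutation (cycle_of_list [0..<q])" by (rule permutation_of_cycle)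
  have "sign (cycle_of_list [0..<q] ^^ Suc m) = sign (cycle_of_list [0..<q]) * sign (cycle_of_list [0..<q] ^^ m)"
    unfolding funpow.simps(2) by (rule sign_compose[OF perm permutation_funpow[OF perm]])
  also have "\<dots> = (-1) ^ (Suc m * (q - 1))"
    using Suc.IH by (simp add: sign_cycle_of_list power_add)
  finally show ?case .
qed simp

lemma rotation_perm_permutes: "(cycle_of_list [0..<q] ^^ m) permutes {..<q}"
  using permutes_funpow[OF cycle_permutes[of "[0..<q]"]] by (simp add: atLeast0LessThan)

lemma permute_list_rotation_perm: "length xs = q \<Longrightarrow> permute_list (cycle_of_list [0..<q] ^^ m) xs = rotate m xs"
proof -
  assume len: "length xs = q"
  have "permute_list (cycle_of_list [0..<q] ^^ m) xs = map (nth xs) (map (cycle_of_list [0..<q] ^^ m) [0..<q])"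
    unfolding permute_list_def using len by simp
  also have "map (cycle_of_list [0..<q] ^^ m) [0..<q] = rotate m [0..<q]"
    by (rule cyclic_rotation) simp
  finally show ?thesis using len by (metis map_nth rotate_map)
qed

lemma permutes_eqI_permute_list:
  assumes "p permutes {..<length xs}" "p' permutes {..<length xs}" "distinct xs"
    "permute_list p xs = permute_list p' xs"
  shows "p = p'"
proof
  fix x
  show "p x = p' x"
  proof (cases "x < length xs")
    case True
    have "xs ! p x = xs ! p' x"
      using assms(4) permute_list_nth[OF assms(1) True] permute_list_nth[OF assms(2) True] by metis
    moreover have "p x < length xs" "p' x < length xs"
      using True permutes_in_image[OF assms(1)] permutes_in_image[OF assms(2)] by auto
    ultimately show ?thesis using assms(3) nth_eq_iff_index_eq by blast
  next
    case False
    then show ?thesis using permutes_not_in[OF assms(1)] permutes_not_in[OF assms(2)] by simp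
  qed
qed

lemma Phi_cyc_permute_list:
  assumes "cyclically_ordered r A" "set A \<subseteq> {..<r}" "\<sigma> permutes {..<length A}"
    "cyclically_ordered r (permute_list \<sigma> A)"
  shows "Phi_cyc r (permute_list \<sigma> A) k = of_int (sign \<sigma>) * Phi_cyc r A k"
proof -
  have ne: "A \<noteq> []" and "distinct A" using assms(1) unfolding cyclically_ordered_def by auto
  obtain m where m: "permute_list \<sigma> A = rotate m A"
    using cyclically_ordered_same_set_rotate[OF assms(1) assms(4)] assms(2,3) by auto
  then have "\<sigma> = cycle_of_list [0..<length A] ^^ m"
    using permutes_eqI_permute_list[OF assms(3) rotation_perm_permutes \<open>distinct A\<close>]
      permute_list_rotation_perm[of A "length A" m] by simp
  then show ?thesis using Phi_cyc_rotate[OF ne] m by (simp add: sign_rotation_perm)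
qed

lemma permute_list_by_eq_permute_list: "permute_list_by = permute_list"
  by (intro ext) (simp add: permute_list_by_def permute_list_def)

lemma Phi_eq_sign_Phi_cyc:
  assumes "distinct a" "a \<noteq> []" "set a \<subseteq> {..<r}" "p permutes {..<length a}"
    "cyclically_ordered r (permute_list p a)"
  shows "Phi r a k = of_int (sign p) * Phi_cyc r (permute_list p a) k"
proof -
  define p0 where "p0 = (SOME p. p permutes {..<length a} \<and> cyclically_ordered r (permute_list p a))"
  have p0: "p0 permutes {..<length a}" "cyclically_ordered r (permute_list p0 a)"
    using someI[of "\<lambda>p. p permutes {..<length a} \<and> cyclically_ordered r (permute_list p a)" p] assms(4,5)
    unfolding p0_def by auto
  have Phi_a: "Phi r a k = of_int (sign p0) * Phi_cyc r (permute_list p0 a) k"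
    using assms(2) unfolding Phi_def permute_list_by_eq_permute_list p0_def[symmetric]
    by (simp add: scale_def Let_def)
  define \<sigma> where "\<sigma> = inv p0 \<circ> p"
  have \<sigma>: "\<sigma> permutes {..<length a}"
    unfolding \<sigma>_def using p0 assms(4) by (intro permutes_compose permutes_inv) auto
  have "p0 \<circ> \<sigma> = p" unfolding \<sigma>_def using permutes_inv_o(1)[OF p0(1)] by (simp add: o_assoc)
  then have "permute_list \<sigma> (permute_list p0 a) = permute_list p a"
    using permute_list_compose[OF \<sigma>, of p0] by simp
  then have "Phi_cyc r (permute_list p a) k = of_int (sign \<sigma>) * Phi_cyc r (permute_list p0 a) k"
    using Phi_cyc_permute_list[of r "permute_list p0 a" \<sigma> k] p0 assms \<sigma> by simp
  moreover have "sign \<sigma> = sign p0 * sign p"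
    unfolding \<sigma>_def using p0(1) assms(4)
    by (simp add: sign_compose sign_inverse permutes_imp_permutation[OF finite_lessThan] permutation_inverse)
  ultimately show ?thesis using Phi_a
    by (simp add: algebra_simps) (metis mult.left_commute mult_1 of_int_1 of_int_mult sign_idempotent)
qed

lemma exists_cyclically_ordering_permutation:
  assumes "distinct a" "a \<noteq> []" "set a \<subseteq> {..<r}"
  obtains p where "p permutes {..<length a}" "cyclically_ordered r (permute_list p a)"
proof -
  let ?s = "sorted_list_of_set (set a)"
  have "mset ?s = mset a"
    using set_eq_iff_mset_eq_distinct[of ?s a] assms(1) by simp
  then obtain p where p: "p permutes {..<length a}" "permute_list p a = ?s"
    using mset_eq_permutation by metis
  have "cyclically_ordered r ?s"
    using sorted_imp_cyclically_ordered[of ?s r] assms(2,3) by simp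
  then show ?thesis using that p by simp
qed

lemma Phi_permute_list:
  assumes "distinct a" "set a \<subseteq> {..<r}" "\<sigma> permutes {..<length a}"
  shows "Phi r (permute_list \<sigma> a) k = of_int (sign \<sigma>) * Phi r a k"
proof (cases "a = []")
  case True
  then have "\<sigma> = id" using assms(3) by simp
  then show ?thesis by simp
next
  case False
  obtain p where p: "p permutes {..<length a}" "cyclically_ordered r (permute_list p a)"
    using exists_cyclically_ordering_permutation[OF assms(1) False assms(2)] .
  define p' where "p' = inv \<sigma> \<circ> p"
  have p': "p' permutes {..<length a}"
    unfolding p'_def using p assms(3) by (intro permutes_compose permutes_inv) auto
  have "\<sigma> \<circ> p' = p" unfolding p'_def using permutes_inv_o(1)[OF assms(3)] by (simp add: o_assoc)
  then have "permute_list p' (permute_list \<sigma> a) = permute_list p a"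
    using permute_list_compose[OF p', of \<sigma>] by simp
  moreover have "distinct (permute_list \<sigma> a)" "set (permute_list \<sigma> a) \<subseteq> {..<r}"
    using assms by simp_all
  moreover have "permute_list \<sigma> a \<noteq> []" using False length_permute_list[of \<sigma> a] by (metis length_0_conv)
  ultimately have "Phi r (permute_list \<sigma> a) k = of_int (sign p') * Phi_cyc r (permute_list p a) k"
    using Phi_eq_sign_Phi_cyc[of "permute_list \<sigma> a" r p' k] p' p by simp
  moreover have "sign p' = sign \<sigma> * sign p"
    unfolding p'_def using p(1) assms(3)
    by (simp add: sign_compose sign_inverse permutes_imp_permutation[OF finite_lessThan] permutation_inverse)
  moreover have "Phi r a k = of_int (sign p) * Phi_cyc r (permute_list p a) k"
    using Phi_eq_sign_Phi_cyc[OF assms(1) False assms(2) p] .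
  ultimately show ?thesis by simp
qed

section \<open>Reduction to strictly increasing sequences\<close>

definition remove_nth :: "nat \<Rightarrow> 'a list \<Rightarrow> 'a list" where
  "remove_nth i a = take i a @ drop (Suc i) a"

lemma length_remove_nth: "i < length a \<Longrightarrow> length (remove_nth i a) = length a - 1"
  unfolding remove_nth_def by simp

lemma nth_remove_nth:
  "i < length a \<Longrightarrow> j < length a - 1 \<Longrightarrow> remove_nth i a ! j = a ! (if j < i then j else Suc j)"
  unfolding remove_nth_def by (auto simp: nth_append min_def)

lemma set_remove_nth: "set (remove_nth i a) \<subseteq> set a"
  unfolding remove_nth_def using set_take_subset set_drop_subset by fastforce

lemma distinct_remove_nth: "distinct a \<Longrightarrow> distinct (remove_nth i a)"
  unfolding remove_nth_def using set_take_disj_set_drop_if_distinct[of a i "Suc i"] by auto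

lemma Phi_of_boundary_eq: "Phi_of_boundary r a k = (\<Sum>i<length a. (-1) ^ i * Phi r (remove_nth i a) k)"
  unfolding Phi_of_boundary_def remove_nth_def by simp

lemma remove_nth_swap_less:
  assumes "i < k" "Suc k < length a"
  shows "remove_nth i (permute_list (transpose k (Suc k)) a) = permute_list (transpose (k - 1) k) (remove_nth i a)"
  using assms
  by (intro nth_equalityI) (auto simp: length_remove_nth nth_remove_nth permute_list_def transpose_def)

lemma remove_nth_swap_greater:
  assumes "Suc k < i" "i < length a"
  shows "remove_nth i (permute_list (transpose k (Suc k)) a) = permute_list (transpose k (Suc k)) (remove_nth i a)"
  using assms
  by (intro nth_equalityI) (auto simp: length_remove_nth nth_remove_nth permute_list_def transpose_def)

lemma remove_nth_swap_left:
  "Suc k < length a \<Longrightarrow> remove_nth k (permute_list (transpose k (Suc k)) a) = remove_nth (Suc k) a"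
  by (intro nth_equalityI) (auto simp: length_remove_nth nth_remove_nth permute_list_def transpose_def less_Suc_eq)

lemma remove_nth_swap_right:
  "Suc k < length a \<Longrightarrow> remove_nth (Suc k) (permute_list (transpose k (Suc k)) a) = remove_nth k a"
  by (intro nth_equalityI) (auto simp: length_remove_nth nth_remove_nth permute_list_def transpose_def less_Suc_eq)

lemma Phi_of_boundary_swap:
  assumes "distinct a" "set a \<subseteq> {..<r}" "Suc k < length a"
  shows "Phi_of_boundary r (permute_list (transpose k (Suc k)) a) j = - Phi_of_boundary r a j"
proof -
  let ?t = "transpose k (Suc k)"
  define f where "f i = (-1::rat) ^ i * Phi r (remove_nth i a) j" for i
  have t: "?t permutes {..<length a}" using assms by (intro permutes_swap_id) auto
  have Phi_swap: "Phi r (permute_list (transpose l (Suc l)) (remove_nth i a)) j = - Phi r (remove_nth i a) j"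
    if "Suc l < length a - 1" "i < length a" for i l
  proof -
    have "transpose l (Suc l) permutes {..<length (remove_nth i a)}"
      using that by (intro permutes_swap_id) (auto simp: length_remove_nth)
    moreover have "set (remove_nth i a) \<subseteq> {..<r}" using set_remove_nth assms(2) by (rule subset_trans)
    ultimately show ?thesis
      using Phi_permute_list[OF distinct_remove_nth[OF assms(1)]] by (simp add: sign_swap_id)
  qed
  have "(-1) ^ i * Phi r (remove_nth i (permute_list ?t a)) j = - f (?t i)" if "i < length a" for i
  proof -
    consider "i < k" | "i = k" | "i = Suc k" | "Suc k < i" by linarith
    then show ?thesis
    proof cases
      case 1
      then show ?thesis
        using Phi_swap[of "k - 1" i] assms(3) remove_nth_swap_less[OF 1 assms(3)] by (simp add: f_def)
    next
      case 2
      then show ?thesis using remove_nth_swap_left[OF assms(3)] by (simp add: f_def)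
    next
      case 3
      then show ?thesis using remove_nth_swap_right[OF assms(3)] by (simp add: f_def)
    next
      case 4
      then show ?thesis
        using Phi_swap[of k i] that remove_nth_swap_greater[OF 4 that] by (simp add: f_def)
    qed
  qed
  then have "Phi_of_boundary r (permute_list ?t a) j = - (\<Sum>i<length a. f (?t i))"
    unfolding Phi_of_boundary_eq by (simp add: sum_negf)
  also have "(\<Sum>i<length a. f (?t i)) = (\<Sum>i<length a. f i)"
    using sum.permute[OF t, of f] by simp
  finally show ?thesis unfolding Phi_of_boundary_eq f_def .
qed
lemma bdW_uminus: "bdW r q (\<lambda>j. - x j) j = - bdW r q x j"
  unfolding bdW_def by (simp add: sum_negf)

lemma chain_map_swap:
  assumes "distinct a" "set a \<subseteq> {..<r}" "Suc k < length a"
    and "Phi_of_boundary r (permute_list (transpose k (Suc k)) a)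
       = bdW r (length a) (Phi r (permute_list (transpose k (Suc k)) a))"
  shows "Phi_of_boundary r a = bdW r (length a) (Phi r a)"
proof
  fix j
  have "transpose k (Suc k) permutes {..<length a}" using assms by (intro permutes_swap_id) auto
  then have "Phi r (permute_list (transpose k (Suc k)) a) = (\<lambda>j. - Phi r a j)"
    using Phi_permute_list[OF assms(1,2)] by (simp add: sign_swap_id fun_eq_iff)
  then have "bdW r (length a) (Phi r (permute_list (transpose k (Suc k)) a)) j = - bdW r (length a) (Phi r a) j"
    by (simp add: bdW_uminus)
  then show "Phi_of_boundary r a j = bdW r (length a) (Phi r a) j"
    using assms(4) Phi_of_boundary_swap[OF assms(1-3), of j] by (metis neg_equal_iff_equal)
qed

definition index_weight :: "nat list \<Rightarrow> nat" where
  "index_weight a = (\<Sum>i<length a. i * a ! i)"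

lemma index_weight_le:
  assumes "set a \<subseteq> {..<r}"
  shows "index_weight a \<le> length a * length a * r"
proof -
  have "i * a ! i \<le> length a * r" if "i < length a" for i
  proof -
    have "a ! i < r" using assms nth_mem[OF that] by auto
    then show ?thesis using that by (intro mult_le_mono) auto
  qed
  then have "index_weight a \<le> (\<Sum>i<length a. length a * r)"
    unfolding index_weight_def by (intro sum_mono) simp
  then show ?thesis by simp
qed

lemma index_weight_swap:
  assumes "Suc k < length a"
  shows "index_weight (permute_list (transpose k (Suc k)) a) + a ! Suc k = index_weight a + a ! k"
proof -
  let ?t = "transpose k (Suc k)"
  have t: "?t permutes {..<length a}" using assms by (intro permutes_swap_id) auto
  have "index_weight (permute_list ?t a) = (\<Sum>i<length a. i * a ! ?t i)"
    unfolding index_weight_def by (intro sum.cong) (auto simp: permute_list_nth[OF t])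
  also have "\<dots> = (\<Sum>i<length a. ?t i * a ! i)"
    using sum.permute[OF t, of "\<lambda>i. i * a ! ?t i"] by simp
  finally have "index_weight (permute_list ?t a) = (\<Sum>i<length a. ?t i * a ! i)" .
  moreover have "(\<Sum>i<length a. ?t i * a ! i + (if i = Suc k then a ! i else 0))
      = (\<Sum>i<length a. i * a ! i + (if i = k then a ! i else 0))"
    by (intro sum.cong) (auto simp: transpose_def)
  ultimately show ?thesis using assms unfolding index_weight_def by (simp add: sum.distrib)
qed

lemma exists_adjacent_descent:
  fixes a :: "nat list"
  assumes "distinct a" "\<not> sorted_wrt (<) a"
  obtains k where "Suc k < length a" "a ! Suc k < a ! k"
proof -
  have transp: "transp ((<) :: nat \<Rightarrow> nat \<Rightarrow> bool)" by (rule transpI) simp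
  obtain k where k: "Suc k < length a" "\<not> a ! k < a ! Suc k"
    using assms(2) by (auto simp: sorted_wrt_iff_nth_Suc_transp[OF transp])
  moreover have "a ! k \<noteq> a ! Suc k" using assms(1) k(1) nth_eq_iff_index_eq by fastforce
  ultimately show ?thesis using that by simp
qed

text \<open>Swapping an adjacent descent increases the bounded weight \<open>\<Sum> i * a\<^sub>i\<close>, so finitely many
  such swaps (each of which changes both sides by a sign) reach the increasing arrangement.\<close>

lemma chain_map_if_sorted:
  assumes sorted_case: "\<And>b. sorted_wrt (<) b \<Longrightarrow> set b \<subseteq> {..<r} \<Longrightarrow> length b = q \<Longrightarrow>
      Phi_of_boundary r b = bdW r q (Phi r b)"
    and "distinct a" "set a \<subseteq> {..<r}" "length a = q"
  shows "Phi_of_boundary r a = bdW r q (Phi r a)"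
  using assms(2-4)
proof (induction "length a * length a * r - index_weight a" arbitrary: a rule: less_induct)
  case less
  show ?case
  proof (cases "sorted_wrt (<) a")
    case True
    then show ?thesis using sorted_case less.prems by simp
  next
    case False
    then obtain k where k: "Suc k < length a" "a ! Suc k < a ! k"
      using exists_adjacent_descent less.prems(1) by blast
    let ?a' = "permute_list (transpose k (Suc k)) a"
    have "transpose k (Suc k) permutes {..<length a}" using k by (intro permutes_swap_id) auto
    then have a': "distinct ?a'" "set ?a' \<subseteq> {..<r}" "length ?a' = q" using less.prems by auto
    have "index_weight a < index_weight ?a'" using index_weight_swap[OF k(1)] k(2) by simp
    moreover have "index_weight ?a' \<le> length a * length a * r"
      using index_weight_le[OF a'(2)] a'(3) less.prems(3) by simp
    ultimately have "Phi_of_boundary r ?a' = bdW r q (Phi r ?a')"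
      using less.hyps[of ?a'] a' less.prems(3) by simp
    then show ?thesis using chain_map_swap[OF less.prems(1,2) k(1)] less.prems(3) by simp
  qed
qed

section \<open>Sums of powers of \<open>\<rho>\<close>\<close>

definition rho_sum :: "nat \<Rightarrow> nat \<Rightarrow> nat \<Rightarrow> nat \<Rightarrow> rat" where
  "rho_sum r a n k = (\<Sum>i=1..n. grp_rho r (a + i) k)"

definition rho_sum2 :: "nat \<Rightarrow> nat \<Rightarrow> nat \<Rightarrow> nat \<Rightarrow> rat" where
  "rho_sum2 r a n k = (\<Sum>i=1..n. grp_rho r (a + 2 * i) k)"

lemma phi_e_eq_rho_sum2:
  "phi_e r a b k = (if even (dd r a b) then rho_sum2 r a (dd r a b div 2) k else 0)"
  unfolding phi_e_def rho_sum2_def by simp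

lemma phi_o_eq_rho_sum2:
  "phi_o r a b k = (if odd (dd r a b) then rho_sum2 r (Suc a) ((dd r a b - 1) div 2) k else 0)"
  unfolding phi_o_def rho_sum2_def by simp

lemma rho_sum_0 [simp]: "rho_sum r a 0 k = 0"
  unfolding rho_sum_def by simp

lemma rho_sum_Suc: "rho_sum r a (Suc n) k = rho_sum r a n k + grp_rho r (a + Suc n) k"
  unfolding rho_sum_def by simp

lemma rho_sum2_0 [simp]: "rho_sum2 r a 0 k = 0"
  unfolding rho_sum2_def by simp

lemma rho_sum2_Suc: "rho_sum2 r a (Suc n) k = rho_sum2 r a n k + grp_rho r (a + 2 * Suc n) k"
  unfolding rho_sum2_def by simp

lemma rho_sum_add: "rho_sum r a (m + n) k = rho_sum r a m k + rho_sum r (a + m) n k"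
  by (induction n) (simp_all add: rho_sum_Suc algebra_simps)

lemma rho_sum2_add: "rho_sum2 r a (m + n) k = rho_sum2 r a m k + rho_sum2 r (a + 2 * m) n k"
  by (induction n) (simp_all add: rho_sum2_Suc algebra_simps)

lemma grp_rho_cong: "a mod r = a' mod r \<Longrightarrow> grp_rho r (a + x) = grp_rho r (a' + x)"
  unfolding grp_rho_def by (metis mod_add_left_eq)

lemma rho_sum_cong: "a mod r = a' mod r \<Longrightarrow> rho_sum r a n k = rho_sum r a' n k"
  unfolding rho_sum_def by (simp add: grp_rho_cong[of a r a'])

lemma rho_sum2_cong: "a mod r = a' mod r \<Longrightarrow> rho_sum2 r a n k = rho_sum2 r a' n k"
  unfolding rho_sum2_def by (simp add: grp_rho_cong[of a r a'])

lemma rho_sum2_interleave: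
  "rho_sum2 r a (Suc n) k + rho_sum2 r (Suc a) n k = rho_sum r (Suc a) (Suc (2 * n)) k"
  by (induction n) (simp_all add: rho_sum2_Suc rho_sum_Suc algebra_simps)

lemma rho_sum_full:
  assumes "k < r"
  shows "rho_sum r a r k = 1"
proof -
  have shift: "rho_sum r (Suc b) r k = rho_sum r b r k" for b
    using rho_sum_add[of r b 1 r k] rho_sum_Suc[of r b r k] grp_rho_cong[of "b + r" r b 1]
    by (simp add: rho_sum_Suc)
  have "rho_sum r a r k = rho_sum r 0 r k"
    by (induction a) (simp_all add: shift)
  also have "\<dots> = (\<Sum>i\<in>{1..r}. if i = (if k = 0 then r else k) then 1 else 0)"
    unfolding rho_sum_def grp_rho_def using assms
    by (intro sum.cong refl) (auto simp: mod_if split: if_splits)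
  also have "\<dots> = 1" using assms by simp
  finally show ?thesis .
qed

lemma sum_grp_rho: "r > 0 \<Longrightarrow> (\<Sum>k<r. grp_rho r a k) = 1"
  unfolding grp_rho_def by simp

lemma sum_rho_sum2: "r > 0 \<Longrightarrow> (\<Sum>k<r. rho_sum2 r a n k) = of_nat n"
  unfolding rho_sum2_def by (subst sum.swap) (simp add: sum_grp_rho)

lemma grp_rho_eq_0:
  assumes "0 < r" "r \<le> j"
  shows "grp_rho r a j = 0"
  unfolding grp_rho_def using mod_less_divisor[OF assms(1), of a] assms(2) by auto

lemma grp_rho_shift:
  assumes "j < r"
  shows "grp_rho r a ((j + r - 1) mod r) = grp_rho r (Suc a) j"
proof -
  have "(j + r - 1) mod r = a mod r \<longleftrightarrow> j = Suc a mod r"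
    using assms by (cases j) (auto simp: mod_Suc)
  then show ?thesis unfolding grp_rho_def by simp
qed

lemma rho_sum2_shift: "j < r \<Longrightarrow> rho_sum2 r a n ((j + r - 1) mod r) = rho_sum2 r (Suc a) n j"
  unfolding rho_sum2_def using grp_rho_shift[of j r] by simp

lemma Phi_eq_0_outside:
  assumes "0 < r" "r \<le> j"
  shows "Phi r a j = 0"
proof -
  have g: "grp_rho r x j = 0" for x using grp_rho_eq_0[OF assms] .
  have "phi_e r x y j = 0" "phi_o r x y j = 0" for x y
    unfolding phi_e_def phi_o_def by (simp_all add: g)
  then have "Phi_e r A j = 0" "Phi_o r A j = 0" for A
    unfolding Phi_e_def Phi_o_def by (simp_all add: Let_def scale_def)
  then have "Phi_cyc r A j = 0" for A
    unfolding Phi_cyc_def by (simp add: scale_def e0_def g)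
  then show ?thesis unfolding Phi_def by (simp add: Let_def scale_def e0_def g)
qed

section \<open>The faces of a cyclically ordered generator\<close>

definition norm_const :: "nat \<Rightarrow> nat \<Rightarrow> rat" where
  "norm_const r n = of_nat (fact (varphi r n)) / of_nat (fact (rt r))"

lemma Phi_cyc_even: "even (length A) \<Longrightarrow> A \<noteq> [] \<Longrightarrow> Phi_cyc r A k = norm_const r (length A) * Phi_e r A k"
  unfolding Phi_cyc_def norm_const_def scale_def by simp

lemma Phi_cyc_odd: "odd (length A) \<Longrightarrow> Phi_cyc r A k = norm_const r (length A) * Phi_o r A k"
  unfolding Phi_cyc_def norm_const_def scale_def by auto

lemma norm_const_pred_odd_diff:
  assumes "odd (r - q)" "1 \<le> q" "q \<le> r"
  shows "norm_const r (q - 1) = norm_const r q"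
proof -
  obtain t where t: "r - q = 2 * t + 1" using assms(1) by (rule oddE)
  have "r - (q - 1) - 1 = r - q" using assms(2,3) by simp
  then have "varphi r (q - 1) = varphi r q" unfolding varphi_def using t by simp
  then show ?thesis unfolding norm_const_def by simp
qed

lemma norm_const_pred_even_diff:
  assumes "r - q = 2 * w" "1 \<le> w" "1 \<le> q"
  shows "norm_const r (q - 1) = of_nat w * norm_const r q"
proof -
  have "varphi r (q - 1) = w" "varphi r q = w - 1" unfolding varphi_def using assms by auto
  moreover have "fact w = (of_nat w * fact (w - 1) :: rat)"
    using assms(2) by (metis fact_num_eq_if not_one_le_zero)
  ultimately show ?thesis unfolding norm_const_def by simp
qed

lemma norm_const_0: "odd r \<Longrightarrow> norm_const r 0 = 1"
  unfolding norm_const_def varphi_def rt_def by (simp add: Suc_leI)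

locale cyclic_generator =
  fixes r :: nat and b :: "nat list"
  assumes r_ge_3: "r \<ge> 3" and odd_r: "odd r" and cyclically_ordered_b: "cyclically_ordered r b"
    and set_b: "set b \<subseteq> {..<r}" and length_b: "length b \<le> r - 1"
begin

abbreviation q :: nat where "q \<equiv> length b"

definition vert :: "nat \<Rightarrow> nat" where
  "vert m = b ! (m mod q)"

definition gap :: "nat \<Rightarrow> nat" where
  "gap m = dd r (vert m) (vert (Suc m))"

text \<open>\<open>face m\<close> is the face of \<open>b\<close> opposite to \<open>vert (m + q - 1)\<close>, listed cyclically from
  \<open>vert m\<close>; its gaps are those of \<open>b\<close> except that \<open>gap (m + q - 2)\<close> and \<open>gap (m + q - 1)\<close> merge.\<close>

definition face :: "nat \<Rightarrow> nat list" where
  "face m = butlast (rotate m b)"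

definition face_gap :: "nat \<Rightarrow> nat \<Rightarrow> nat" where
  "face_gap m k = (if k < q - 2 then gap (m + k) else gap (m + (q - 2)) + gap (m + (q - 1)))"

definition even_gaps :: "nat set" where
  "even_gaps = {t. t < q \<and> even (gap t)}"

lemma b_ne: "b \<noteq> []" and distinct_b: "distinct b"
  using cyclically_ordered_b unfolding cyclically_ordered_def by auto

lemma q_pos: "q > 0"
  using b_ne by simp

lemma vert_less: "vert m < r"
proof -
  have "b ! (m mod q) \<in> set b" using q_pos by simp
  then show ?thesis using set_b unfolding vert_def by auto
qed

lemma vert_add_q: "vert (m + q) = vert m"
  unfolding vert_def by simp

lemma gap_mod: "gap (m mod q) = gap m"
  unfolding gap_def vert_def by (simp add: mod_Suc_eq)

lemma gap_add_q: "gap (m + q) = gap m"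
  using gap_mod[of "m + q"] gap_mod[of m] by simp

lemma vert_add_gap: "(vert m + gap m) mod r = vert (Suc m)"
  unfolding gap_def by (rule add_dd_mod[OF vert_less vert_less])

lemma cyc_next_b: "i < q \<Longrightarrow> cyc_next r b i = gap i"
  unfolding cyc_next_def gap_def vert_def by simp

lemma sum_gap: "(\<Sum>i<q. gap (m + i)) = r"
proof -
  have "(\<Sum>i<q. gap (m + i)) = (\<Sum>i<q. gap i)" using sum_shift_periodic[of gap q m] gap_add_q by simp
  also have "\<dots> = (\<Sum>i<q. cyc_next r b i)" by (simp add: cyc_next_b)
  finally show ?thesis using cyclically_ordered_b unfolding cyclically_ordered_def by simp
qed

lemma dd_vert_Suc_Suc:
  assumes "q \<ge> 2"
  shows "dd r (vert m) (vert (Suc (Suc m))) = gap m + gap (Suc m)"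
proof (rule dd_eqI)
  have "(\<Sum>i\<in>{0, 1}. gap (m + i)) \<le> (\<Sum>i<q. gap (m + i))"
    using assms by (intro sum_mono2) auto
  then show "gap m + gap (Suc m) \<le> r" using sum_gap[of m] by simp
  have "1 \<le> gap m" unfolding gap_def by (rule dd_ge_1[OF vert_less vert_less])
  then show "1 \<le> gap m + gap (Suc m)" by simp
  have "(vert m + (gap m + gap (Suc m))) mod r = ((vert m + gap m) mod r + gap (Suc m)) mod r"
    by (simp add: mod_add_left_eq add.assoc)
  then show "(vert m + (gap m + gap (Suc m))) mod r = vert (Suc (Suc m))"
    by (simp add: vert_add_gap)
qed (rule vert_less)+

lemma even_gap_iff: "even (gap t) \<longleftrightarrow> t mod q \<in> even_gaps"
  unfolding even_gaps_def using q_pos by (simp add: gap_mod)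

lemma even_entry_b_iff: "even_entry r b t \<longleftrightarrow> t \<in> even_gaps"
  unfolding even_entry_def even_gaps_def by (auto simp: cyc_next_b)

lemma even_gaps_eq_image:
  "even_gaps = (\<lambda>k. (m + k) mod q) ` {k. k < q \<and> even (gap (m + k))}"
proof
  show "(\<lambda>k. (m + k) mod q) ` {k. k < q \<and> even (gap (m + k))} \<subseteq> even_gaps"
    using q_pos by (auto simp: even_gaps_def gap_mod)
  show "even_gaps \<subseteq> (\<lambda>k. (m + k) mod q) ` {k. k < q \<and> even (gap (m + k))}"
  proof
    fix x assume x: "x \<in> even_gaps"
    obtain k where k: "k < q" "(m + k) mod q = x mod q" using exists_add_mod_eq[OF q_pos] .
    have "x < q" "even (gap x)" using x by (auto simp: even_gaps_def)
    then show "x \<in> (\<lambda>k. (m + k) mod q) ` {k. k < q \<and> even (gap (m + k))}"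
      using k gap_mod[of "m + k"] gap_mod[of x] by (intro image_eqI[of _ _ k]) auto
  qed
qed

lemma length_face: "length (face m) = q - 1"
  unfolding face_def by simp

lemma nth_face: "k < q - 1 \<Longrightarrow> face m ! k = vert (m + k)"
  unfolding face_def vert_def by (simp add: nth_butlast nth_rotate)

lemma face_mod: "face (m mod q) = face m"
  unfolding face_def by (metis rotate_conv_mod)

lemma face_add_q: "face (m + q) = face m"
  using face_mod[of "m + q"] face_mod[of m] by simp

lemma cyc_next_face:
  assumes "q \<ge> 2" "k < q - 1"
  shows "cyc_next r (face m) k = face_gap m k"
proof (cases "k < q - 2")
  case True
  then show ?thesis using assms unfolding cyc_next_def gap_def face_gap_def
    by (simp add: length_face nth_face)
next
  case False
  then have k: "k = q - 2" using assms by simp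
  then have "Suc k = q - 1" using assms by simp
  then have "Suc k mod (q - 1) = 0" by simp
  have "Suc (Suc (m + (q - 2))) = m + q" using assms(1) by simp
  then have "vert m = vert (Suc (Suc (m + (q - 2))))" by (metis vert_add_q)
  then have "cyc_next r (face m) k = dd r (vert (m + (q - 2))) (vert (Suc (Suc (m + (q - 2)))))"
    unfolding cyc_next_def using assms k \<open>Suc k mod (q - 1) = 0\<close> by (simp add: length_face nth_face)
  also have "\<dots> = gap (m + (q - 2)) + gap (Suc (m + (q - 2)))" by (rule dd_vert_Suc_Suc[OF assms(1)])
  also have "Suc (m + (q - 2)) = m + (q - 1)" using assms(1) by simp
  finally show ?thesis using k by (simp add: face_gap_def)
qed

lemma even_entry_face_iff:
  "q \<ge> 2 \<Longrightarrow> even_entry r (face m) k \<longleftrightarrow> k < q - 1 \<and> even (face_gap m k)"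
  unfolding even_entry_def by (auto simp: length_face cyc_next_face)

lemma sum_face_gap:
  assumes "q \<ge> 2"
  shows "(\<Sum>k<q - 1. face_gap m k) = r"
proof -
  have "q - 1 = Suc (q - 2)" "q = Suc (Suc (q - 2))" using assms by auto
  then have "(\<Sum>k<q - 1. face_gap m k) = (\<Sum>k<q - 2. gap (m + k)) + (gap (m + (q - 2)) + gap (m + (q - 1)))"
    by (simp add: face_gap_def)
  also have "\<dots> = (\<Sum>k<q. gap (m + k))"
    using \<open>q = Suc (Suc (q - 2))\<close> by (metis (no_types) add.assoc diff_Suc_1 sum.lessThan_Suc)
  finally show ?thesis by (simp add: sum_gap)
qed

lemma face_cyclically_ordered:
  assumes "q \<ge> 2"
  shows "cyclically_ordered r (face m)"
  unfolding cyclically_ordered_def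
proof (intro conjI)
  show "face m \<noteq> []" using assms length_face[of m] by auto
  show "distinct (face m)" unfolding face_def using distinct_b by (simp add: distinct_butlast)
  show "(\<Sum>k<length (face m). cyc_next r (face m) k) = r"
    using sum_face_gap[OF assms] by (simp add: length_face cyc_next_face[OF assms])
qed

lemma rotate_remove_nth: "i < q \<Longrightarrow> rotate i (remove_nth i b) = face (Suc i)"
proof -
  assume i: "i < q"
  have "rotate i (remove_nth i b) = drop (Suc i) b @ take i b"
    unfolding remove_nth_def using rotate_append[of "take i b" "drop (Suc i) b"] i by simp
  moreover have "rotate (Suc i) b = drop (Suc i) b @ take (Suc i) b"
    using rotate_append[of "take (Suc i) b" "drop (Suc i) b"] i by simp
  ultimately show ?thesis
    unfolding face_def using i by (simp add: butlast_append take_Suc_conv_app_nth)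
qed

lemma Phi_b_eq_Phi_cyc: "Phi r b k = Phi_cyc r b k"
  using Phi_eq_sign_Phi_cyc[OF distinct_b b_ne set_b, of id k] cyclically_ordered_b by simp

lemma Phi_remove_nth:
  assumes "q \<ge> 2" "i < q"
  shows "Phi r (remove_nth i b) k = (-1) ^ (i * q) * Phi_cyc r (face (Suc i)) k"
proof -
  have len: "length (remove_nth i b) = q - 1" using assms by (simp add: length_remove_nth)
  then have ne: "remove_nth i b \<noteq> []" using assms by auto
  have "cyclically_ordered r (remove_nth i b)"
    using cyclically_ordered_rotate[OF face_cyclically_ordered[OF assms(1)], of _ "Suc i"]
      rotate_inverse[of "remove_nth i b" i] rotate_remove_nth[OF assms(2)] by metis
  then have "Phi r (remove_nth i b) k = Phi_cyc r (remove_nth i b) k"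
    using Phi_eq_sign_Phi_cyc[OF distinct_remove_nth[OF distinct_b] ne, of r id k]
      subset_trans[OF set_remove_nth set_b] by simp
  moreover have "Phi_cyc r (face (Suc i)) k = (-1) ^ (i * (length (remove_nth i b) - 1)) * Phi_cyc r (remove_nth i b) k"
    by (metis Phi_cyc_rotate[OF ne] rotate_remove_nth[OF assms(2)])
  moreover have "(-1::rat) ^ (i * (length (remove_nth i b) - 1)) = (-1) ^ (i * q)"
  proof -
    have "q = (length (remove_nth i b) - 1) + 2" using assms len by simp
    then have "i * q = i * (length (remove_nth i b) - 1) + 2 * i" by (metis add_mult_distrib2 mult.commute)
    then show ?thesis by (simp add: power_add power_mult)
  qed
  moreover have "(-1::rat) ^ (i * q) * (-1) ^ (i * q) = 1"
    by (simp flip: power_add)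
  ultimately show ?thesis by (metis mult.assoc mult_1)
qed

lemma Phi_of_boundary_faces:
  assumes "q \<ge> 2"
  shows "Phi_of_boundary r b k = (\<Sum>i<q. (-1) ^ i * (-1) ^ (i * q) * Phi_cyc r (face (Suc i)) k)"
  unfolding Phi_of_boundary_eq using Phi_remove_nth[OF assms] by (simp add: mult.assoc)


lemma phi_e_vert: "even (gap t) \<Longrightarrow> phi_e r (vert t) (vert (Suc t)) j = rho_sum2 r (vert t) (gap t div 2) j"
  unfolding phi_e_eq_rho_sum2 gap_def by simp

lemma phi_o_vert: "odd (gap t) \<Longrightarrow> phi_o r (vert t) (vert (Suc t)) j = rho_sum2 r (Suc (vert t)) ((gap t - 1) div 2) j"
  unfolding phi_o_eq_rho_sum2 gap_def by simp

lemma Phi_o_face_eq_0: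
  assumes "q \<ge> 2" "k < q - 1" "even (face_gap m k)"
  shows "Phi_o r (face m) j = 0"
proof -
  have "even_entry r (face m) k" using assms by (simp add: even_entry_face_iff)
  then show ?thesis unfolding Phi_o_def by auto
qed

lemma Phi_o_face_all_odd:
  assumes "q \<ge> 2" "\<And>k. k < q - 1 \<Longrightarrow> odd (face_gap m k)"
  shows "Phi_o r (face m) j =
    (\<Sum>k<q - 2. phi_o r (vert (m + k)) (vert (Suc (m + k))) j) + phi_o r (vert (m + (q - 2))) (vert m) j"
proof -
  have no_even: "\<forall>k. \<not> even_entry r (face m) k"
    using assms by (auto simp: even_entry_face_iff)
  have len: "length (face m) = Suc (q - 2)" using assms(1) by (simp add: length_face)
  have "Phi_o r (face m) j = (\<Sum>k<Suc (q - 2). phi_o r (face m ! k) (face m ! (Suc k mod Suc (q - 2))) j)"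
    unfolding Phi_o_def using no_even len by simp
  also have "\<dots> = (\<Sum>k<q - 2. phi_o r (vert (m + k)) (vert (Suc (m + k))) j)
      + phi_o r (vert (m + (q - 2))) (vert m) j"
    using assms(1) by (simp add: nth_face)
  finally show ?thesis .
qed

lemma Phi_e_face_single:
  assumes "q \<ge> 2" "k0 < q - 1" "\<And>k. k < q - 1 \<Longrightarrow> even (face_gap m k) \<longleftrightarrow> k = k0"
  shows "Phi_e r (face m) j =
    (-1) ^ (k0 + 1) * phi_e r (vert (m + k0)) (if k0 < q - 2 then vert (Suc (m + k0)) else vert m) j"
proof -
  have "{k. even_entry r (face m) k} = {k0}"
    using assms by (auto simp: even_entry_face_iff[OF assms(1)])
  moreover have "face m ! ((k0 + 1) mod length (face m)) = (if k0 < q - 2 then vert (Suc (m + k0)) else vert m)"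
  proof (cases "k0 < q - 2")
    case True
    then show ?thesis by (simp add: length_face nth_face)
  next
    case False
    then have "Suc k0 = length (face m)" using assms(2) by (simp add: length_face)
    then show ?thesis using False assms(1) by (simp add: nth_face)
  qed
  ultimately show ?thesis using assms(2) by (simp add: Phi_e_eq_single scale_def nth_face)
qed

lemma Phi_e_face_single_unmerged:
  assumes "q \<ge> 2" "k0 < q - 2" "\<And>k. k < q - 1 \<Longrightarrow> even (face_gap m k) \<longleftrightarrow> k = k0"
  shows "Phi_e r (face m) j = (-1) ^ (k0 + 1) * phi_e r (vert (m + k0)) (vert (Suc (m + k0))) j"
  using Phi_e_face_single[OF assms(1) _ assms(3)] assms(2) by simp

lemma Phi_e_face_two:
  assumes "q \<ge> 2" "k1 < q - 1" "k2 < q - 1" "k1 \<noteq> k2" "even (face_gap m k1)" "even (face_gap m k2)"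
  shows "Phi_e r (face m) j = 0"
proof -
  have "{k1, k2} \<subseteq> {k. even_entry r (face m) k}"
    using assms by (auto simp: even_entry_face_iff)
  then have "card {k. even_entry r (face m) k} \<noteq> 1"
    using assms(4) by (metis card_1_singletonE insert_subset singletonD)
  then show ?thesis by (simp add: Phi_e_eq_0)
qed

lemma vert_add_sum_gap: "(vert 0 + (\<Sum>m<n. gap m)) mod r = vert n"
proof (induction n)
  case 0
  then show ?case using vert_less[of 0] by simp
next
  case (Suc n)
  have "(vert 0 + (\<Sum>m<Suc n. gap m)) mod r = ((vert 0 + (\<Sum>m<n. gap m)) mod r + gap n) mod r"
    by (simp add: mod_add_left_eq add.assoc)
  then show ?case using Suc.IH vert_add_gap[of n] by simp
qed

lemma sum_rho_sum_gaps: "(\<Sum>m<n. rho_sum r (Suc (vert m)) (gap m) j) = rho_sum r (Suc (vert 0)) (\<Sum>m<n. gap m) j"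
proof (induction n)
  case (Suc n)
  have "rho_sum r (Suc (vert 0) + (\<Sum>m<n. gap m)) (gap n) j = rho_sum r (Suc (vert n)) (gap n) j"
    by (rule rho_sum_cong) (metis add_Suc mod_Suc_eq vert_add_sum_gap)
  then show ?case using Suc.IH by (simp add: rho_sum_add)
qed simp

lemma rho_sum2_vert_add_gap: "rho_sum2 r (vert t + gap t + c) n k = rho_sum2 r (vert (Suc t) + c) n k"
  by (rule rho_sum2_cong) (metis mod_add_left_eq vert_add_gap)

lemma phi_o_merge_odd_even:
  assumes "q \<ge> 2" "odd (gap t)" "even (gap (Suc t))"
  shows "phi_o r (vert t) (vert (Suc (Suc t))) j =
    phi_o r (vert t) (vert (Suc t)) j + rho_sum2 r (vert (Suc t)) (gap (Suc t) div 2) j"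
proof -
  obtain u v where u: "gap t = 2 * u + 1" and v: "gap (Suc t) = 2 * v"
    using assms(2,3) by (metis evenE oddE)
  have "phi_o r (vert t) (vert (Suc (Suc t))) j = rho_sum2 r (Suc (vert t)) (u + v) j"
    unfolding phi_o_eq_rho_sum2 dd_vert_Suc_Suc[OF assms(1)] u v by simp
  also have "\<dots> = rho_sum2 r (Suc (vert t)) u j + rho_sum2 r (Suc (vert t) + 2 * u) v j"
    by (rule rho_sum2_add)
  also have "Suc (vert t) + 2 * u = vert t + gap t + 0" using u by simp
  also have "rho_sum2 r (vert t + gap t + 0) v j = rho_sum2 r (vert (Suc t) + 0) v j"
    by (rule rho_sum2_vert_add_gap)
  finally show ?thesis using phi_o_vert[OF assms(2)] u v by simp
qed

lemma phi_o_merge_even_odd: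
  assumes "q \<ge> 2" "even (gap t)" "odd (gap (Suc t))"
  shows "phi_o r (vert t) (vert (Suc (Suc t))) j =
    rho_sum2 r (Suc (vert t)) (gap t div 2) j + phi_o r (vert (Suc t)) (vert (Suc (Suc t))) j"
proof -
  obtain u v where v: "gap t = 2 * v" and u: "gap (Suc t) = 2 * u + 1"
    using assms(2,3) by (metis evenE oddE)
  have "phi_o r (vert t) (vert (Suc (Suc t))) j = rho_sum2 r (Suc (vert t)) (v + u) j"
    unfolding phi_o_eq_rho_sum2 dd_vert_Suc_Suc[OF assms(1)] u v by simp
  also have "\<dots> = rho_sum2 r (Suc (vert t)) v j + rho_sum2 r (Suc (vert t) + 2 * v) u j"
    by (rule rho_sum2_add)
  also have "Suc (vert t) + 2 * v = vert t + gap t + 1" using v by simp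
  also have "rho_sum2 r (vert t + gap t + 1) u j = rho_sum2 r (vert (Suc t) + 1) u j"
    by (rule rho_sum2_vert_add_gap)
  finally show ?thesis using phi_o_vert[OF assms(3)] u v by simp
qed

lemma phi_e_merge_even_even:
  assumes "q \<ge> 2" "even (gap t)" "even (gap (Suc t))"
  shows "phi_e r (vert t) (vert (Suc (Suc t))) j =
    phi_e r (vert t) (vert (Suc t)) j + phi_e r (vert (Suc t)) (vert (Suc (Suc t))) j"
proof -
  obtain u v where u: "gap t = 2 * u" and v: "gap (Suc t) = 2 * v"
    using assms(2,3) by (metis evenE)
  have "phi_e r (vert t) (vert (Suc (Suc t))) j = rho_sum2 r (vert t) (u + v) j"
    unfolding phi_e_eq_rho_sum2 dd_vert_Suc_Suc[OF assms(1)] u v by simp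
  also have "\<dots> = rho_sum2 r (vert t) u j + rho_sum2 r (vert t + 2 * u) v j"
    by (rule rho_sum2_add)
  also have "vert t + 2 * u = vert t + gap t + 0" using u by simp
  also have "rho_sum2 r (vert t + gap t + 0) v j = rho_sum2 r (vert (Suc t) + 0) v j"
    by (rule rho_sum2_vert_add_gap)
  finally show ?thesis using phi_e_vert[OF assms(2)] phi_e_vert[OF assms(3)] u v by simp
qed

lemma phi_e_merge_odd_odd:
  assumes "q \<ge> 2" "odd (gap t)" "odd (gap (Suc t))"
  shows "phi_e r (vert t) (vert (Suc (Suc t))) j =
    rho_sum2 r (vert t) (Suc ((gap t - 1) div 2)) j + phi_o r (vert (Suc t)) (vert (Suc (Suc t))) j"
proof -
  obtain u v where u: "gap t = 2 * u + 1" and v: "gap (Suc t) = 2 * v + 1"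
    using assms(2,3) by (metis oddE)
  have "phi_e r (vert t) (vert (Suc (Suc t))) j = rho_sum2 r (vert t) (Suc u + v) j"
    unfolding phi_e_eq_rho_sum2 dd_vert_Suc_Suc[OF assms(1)] u v by simp
  also have "\<dots> = rho_sum2 r (vert t) (Suc u) j + rho_sum2 r (vert t + 2 * Suc u) v j"
    by (rule rho_sum2_add)
  also have "vert t + 2 * Suc u = vert t + gap t + 1" using u by simp
  also have "rho_sum2 r (vert t + gap t + 1) v j = rho_sum2 r (vert (Suc t) + 1) v j"
    by (rule rho_sum2_vert_add_gap)
  finally show ?thesis using phi_o_vert[OF assms(3)] u v by simp
qed

lemma chain_map_singleton:
  assumes "q = 1"
  shows "Phi_of_boundary r b j = bdW r q (Phi r b) j"
proof -
  have "remove_nth 0 b = []" unfolding remove_nth_def using assms by simp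
  then have lhs: "Phi_of_boundary r b j = grp_rho r 0 j"
    unfolding Phi_of_boundary_eq using assms by (simp add: Phi_def e0_def)
  have gap: "gap t = r" for t
    using sum_gap[of t] assms by simp
  have "Phi r b k = norm_const r 1 * rho_sum2 r (Suc (vert 0)) (rt r) k" for k
  proof -
    have "\<forall>t. \<not> even_entry r b t" using odd_r assms by (auto simp: even_entry_def cyc_next_b gap)
    then have "Phi_o r b k = phi_o r (vert 0) (vert (Suc 0)) k"
      unfolding Phi_o_def using assms by (simp add: vert_def)
    also have "\<dots> = rho_sum2 r (Suc (vert 0)) (rt r) k"
      using phi_o_vert[of 0 k] odd_r by (simp add: gap rt_def)
    finally show ?thesis using Phi_b_eq_Phi_cyc Phi_cyc_odd[of b r k] assms by simp
  qed
  then have "(\<Sum>k<r. Phi r b k) = norm_const r 1 * of_nat (rt r)"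
    using r_ge_3 by (simp add: sum_distrib_left[symmetric] sum_rho_sum2)
  also have "\<dots> = 1"
  proof -
    have "r - 1 = 2 * rt r" "1 \<le> rt r" using odd_r r_ge_3 unfolding rt_def by auto
    then show ?thesis using norm_const_pred_even_diff[of r 1 "rt r"] norm_const_0[OF odd_r] by (simp add: mult.commute)
  qed
  finally show ?thesis unfolding lhs bdW_def using assms by (simp add: grp_rho_def)
qed


end

section \<open>Generators of even length\<close>

locale even_generator = cyclic_generator +
  assumes even_q: "even q"
begin

lemma q_ge_2: "q \<ge> 2"
  using even_q q_pos by presburger

lemma Phi_of_boundary_even:
  "Phi_of_boundary r b j = - norm_const r q * (\<Sum>m<q. (-1) ^ m * Phi_o r (face m) j)"
proof -
  define h where "h m = (-1) ^ m * Phi_o r (face m) j" for m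
  have "h (m + q) = h m" for m
    unfolding h_def using face_add_q[of m] even_q by (simp add: power_add)
  then have shift: "(\<Sum>i<q. h (1 + i)) = (\<Sum>m<q. h m)" by (rule sum_shift_periodic)
  have "odd (q - 1)" using even_q q_pos by simp
  moreover have "norm_const r (q - 1) = norm_const r q"
  proof (rule norm_const_pred_odd_diff)
    show "odd (r - q)" using even_q odd_r length_b by simp
    show "1 \<le> q" using q_pos by linarith
    show "q \<le> r" using length_b by linarith
  qed
  ultimately have "Phi_cyc r (face m) j = norm_const r q * Phi_o r (face m) j" for m
    using Phi_cyc_odd[of "face m" r j] by (simp add: length_face)
  then have "Phi_of_boundary r b j = - norm_const r q * (\<Sum>i<q. h (1 + i))"
    unfolding Phi_of_boundary_faces[OF q_ge_2] h_def using even_q b_ne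
    by (simp add: sum_distrib_left sum_negf algebra_simps)
  also note shift
  finally show ?thesis unfolding h_def .
qed

lemma bdW_Phi_even:
  assumes "j < r"
  shows "bdW r q (Phi r b) j = norm_const r q * (Phi_e r b ((j + r - 1) mod r) - Phi_e r b j)"
proof -
  have "Phi r b k = norm_const r q * Phi_e r b k" for k
    using Phi_b_eq_Phi_cyc Phi_cyc_even[OF even_q b_ne] by simp
  then show ?thesis unfolding bdW_def using assms even_q q_ge_2 b_ne by (simp add: algebra_simps)
qed


lemma Phi_e_b_unique:
  assumes "even_gaps = {j0}"
  shows "Phi_e r b k = (-1) ^ (j0 + 1) * rho_sum2 r (vert j0) (gap j0 div 2) k"
proof -
  have "{j. even_entry r b j} = {j0}" using assms by (simp add: even_entry_b_iff)
  moreover have "j0 < q" "even (gap j0)" using assms unfolding even_gaps_def by auto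
  moreover have "b ! j0 = vert j0" "b ! (Suc j0 mod q) = vert (Suc j0)"
    using \<open>j0 < q\<close> by (simp_all add: vert_def)
  ultimately show ?thesis by (simp add: Phi_e_eq_single scale_def phi_e_vert)
qed

lemma odd_gap_unique:
  assumes "even_gaps = {j0}" "s mod q \<noteq> 0"
  shows "odd (gap (j0 + s))"
proof -
  have "j0 < q" using assms(1) unfolding even_gaps_def by auto
  then have "(j0 + s) mod q \<noteq> (j0 + 0) mod q"
    using assms(2) add_mod_cancel_left[of "s mod q" q 0 j0] q_pos by (auto simp: mod_add_right_eq)
  then show ?thesis using assms(1) \<open>j0 < q\<close> by (simp add: even_gap_iff)
qed

lemma sum_Phi_o_faces_unique:
  assumes "even_gaps = {j0}"
  shows "(\<Sum>m<q. (-1) ^ m * Phi_o r (face m) j) =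
    (-1) ^ Suc j0 * (Phi_o r (face (Suc j0)) j - Phi_o r (face (Suc (Suc j0))) j)"
proof -
  define h where "h m = (-1) ^ m * Phi_o r (face m) j" for m
  have zero: "h (Suc j0 + Suc (Suc i)) = 0" if "i < q - 2" for i
  proof -
    text \<open>This face keeps the even gap \<open>gap j0 = gap (j0 + q)\<close> unmerged, at position \<open>q - 3 - i\<close>.\<close>
    have "Suc j0 + Suc (Suc i) + (q - 3 - i) = j0 + q" using that by simp
    moreover have "j0 < q" using assms unfolding even_gaps_def by auto
    ultimately have "even (face_gap (Suc j0 + Suc (Suc i)) (q - 3 - i))"
      using assms even_gap_iff[of "j0 + q"] that by (simp add: face_gap_def)
    moreover have "q - 3 - i < q - 1" using that by linarith
    ultimately show ?thesis unfolding h_def using Phi_o_face_eq_0[OF q_ge_2] by simp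
  qed
  have "h (m + q) = h m" for m
    unfolding h_def using face_add_q[of m] even_q by (simp add: power_add)
  then have "(\<Sum>m<q. h m) = (\<Sum>i<q. h (Suc j0 + i))" by (rule sum_shift_periodic[symmetric])
  also have "\<dots> = h (Suc j0) + h (Suc (Suc j0)) + (\<Sum>i<q - 2. h (Suc j0 + Suc (Suc i)))"
    using sum_split_first_two[OF q_ge_2, of "\<lambda>i. h (Suc j0 + i)"] by simp
  also have "(\<Sum>i<q - 2. h (Suc j0 + Suc (Suc i))) = 0" using zero by simp
  finally show ?thesis unfolding h_def by (simp add: algebra_simps)
qed


lemma Phi_o_face_Suc_unique:
  assumes "even_gaps = {j0}"
  shows "Phi_o r (face (Suc j0)) j =
    (\<Sum>k<q - 2. phi_o r (vert (Suc j0 + k)) (vert (Suc (Suc j0 + k))) j)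
    + phi_o r (vert (j0 + (q - 1))) (vert (j0 + q)) j + rho_sum2 r (vert j0) (gap j0 div 2) j"
proof -
  have idx: "Suc j0 + (q - 2) = j0 + (q - 1)" "Suc j0 + (q - 1) = j0 + q" "Suc (j0 + (q - 1)) = j0 + q"
    using q_ge_2 by auto
  have odd1: "odd (gap (j0 + (q - 1)))" using odd_gap_unique[OF assms, of "q - 1"] q_ge_2 by simp
  have even0: "even (gap j0)" using assms unfolding even_gaps_def by auto
  have "odd (face_gap (Suc j0) k)" if "k < q - 1" for k
  proof (cases "k < q - 2")
    case True
    then show ?thesis using odd_gap_unique[OF assms, of "Suc k"] by (simp add: face_gap_def)
  next
    case False
    then have "face_gap (Suc j0) k = gap (j0 + (q - 1)) + gap (j0 + q)"
      unfolding face_gap_def idx by simp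
    then show ?thesis using odd1 even0 gap_add_q[of j0] by simp
  qed
  then have "Phi_o r (face (Suc j0)) j =
    (\<Sum>k<q - 2. phi_o r (vert (Suc j0 + k)) (vert (Suc (Suc j0 + k))) j)
    + phi_o r (vert (Suc j0 + (q - 2))) (vert (Suc j0)) j"
    by (rule Phi_o_face_all_odd[OF q_ge_2])
  also have "vert (Suc j0) = vert (Suc (Suc (j0 + (q - 1))))"
    unfolding idx(3) using vert_add_q[of "Suc j0"] by simp
  also have "phi_o r (vert (Suc j0 + (q - 2))) (vert (Suc (Suc (j0 + (q - 1))))) j =
      phi_o r (vert (j0 + (q - 1))) (vert (Suc (j0 + (q - 1)))) j
      + rho_sum2 r (vert (Suc (j0 + (q - 1)))) (gap (Suc (j0 + (q - 1))) div 2) j"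
  proof -
    have "even (gap (Suc (j0 + (q - 1))))" unfolding idx(3) using even0 gap_add_q[of j0] by simp
    then show ?thesis unfolding idx(1) by (rule phi_o_merge_odd_even[OF q_ge_2 odd1])
  qed
  finally show ?thesis unfolding idx(3) vert_add_q gap_add_q by (simp add: add.assoc)
qed

lemma Phi_o_face_Suc_Suc_unique:
  assumes "even_gaps = {j0}"
  shows "Phi_o r (face (Suc (Suc j0))) j =
    (\<Sum>k<q - 2. phi_o r (vert (Suc (Suc j0 + k))) (vert (Suc (Suc (Suc j0 + k)))) j)
    + rho_sum2 r (Suc (vert j0)) (gap j0 div 2) j + phi_o r (vert (Suc j0)) (vert (Suc (Suc j0))) j"
proof -
  have idx: "Suc (Suc j0) + (q - 2) = j0 + q" "Suc (Suc j0) + (q - 1) = Suc (j0 + q)" using q_ge_2 by auto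
  have odd1: "odd (gap (Suc j0))" using odd_gap_unique[OF assms, of 1] q_ge_2 by simp
  have even0: "even (gap j0)" using assms unfolding even_gaps_def by auto
  have "odd (face_gap (Suc (Suc j0)) k)" if "k < q - 1" for k
  proof (cases "k < q - 2")
    case True
    then show ?thesis using odd_gap_unique[OF assms, of "Suc (Suc k)"] by (simp add: face_gap_def)
  next
    case False
    then have "face_gap (Suc (Suc j0)) k = gap (j0 + q) + gap (Suc j0 + q)"
      unfolding face_gap_def idx by simp
    then show ?thesis using odd1 even0 gap_add_q[of j0] gap_add_q[of "Suc j0"] by simp
  qed
  then have "Phi_o r (face (Suc (Suc j0))) j =
    (\<Sum>k<q - 2. phi_o r (vert (Suc (Suc j0) + k)) (vert (Suc (Suc (Suc j0) + k))) j)
    + phi_o r (vert j0) (vert (Suc (Suc j0))) j"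
    using Phi_o_face_all_odd[OF q_ge_2] idx vert_add_q[of j0] by simp
  also have "phi_o r (vert j0) (vert (Suc (Suc j0))) j =
      rho_sum2 r (Suc (vert j0)) (gap j0 div 2) j + phi_o r (vert (Suc j0)) (vert (Suc (Suc j0))) j"
    by (rule phi_o_merge_even_odd[OF q_ge_2 even0 odd1])
  finally show ?thesis by (simp add: add.assoc)
qed

lemma Phi_o_faces_diff_unique:
  assumes "even_gaps = {j0}"
  shows "Phi_o r (face (Suc j0)) j - Phi_o r (face (Suc (Suc j0))) j =
    rho_sum2 r (vert j0) (gap j0 div 2) j - rho_sum2 r (Suc (vert j0)) (gap j0 div 2) j"
proof -
  define e where "e t = phi_o r (vert t) (vert (Suc t)) j" for t
  have "(\<Sum>k<q - 2. e (Suc j0 + k)) - (\<Sum>k<q - 2. e (Suc j0 + Suc k)) =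
      (\<Sum>k<q - 2. e (Suc j0 + k) - e (Suc j0 + Suc k))"
    by (rule sum_subtractf[symmetric])
  also have "\<dots> = e (Suc j0 + 0) - e (Suc j0 + (q - 2))"
    by (rule sum_lessThan_telescope')
  also have "e (Suc j0 + (q - 2)) = phi_o r (vert (j0 + (q - 1))) (vert (j0 + q)) j"
  proof -
    have "Suc j0 + (q - 2) = j0 + (q - 1)" "Suc (j0 + (q - 1)) = j0 + q" using q_ge_2 by simp_all
    then show ?thesis unfolding e_def by (simp only:)
  qed
  finally show ?thesis
    using Phi_o_face_Suc_unique[OF assms] Phi_o_face_Suc_Suc_unique[OF assms]
    unfolding e_def by (simp add: algebra_simps)
qed

lemma chain_map_even_unique:
  assumes "even_gaps = {j0}" "j < r"
  shows "Phi_of_boundary r b j = bdW r q (Phi r b) j"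
proof -
  have faces: "(\<Sum>m<q. (-1) ^ m * Phi_o r (face m) j) =
      (-1) ^ Suc j0 * (rho_sum2 r (vert j0) (gap j0 div 2) j - rho_sum2 r (Suc (vert j0)) (gap j0 div 2) j)"
    using sum_Phi_o_faces_unique[OF assms(1)] Phi_o_faces_diff_unique[OF assms(1)] by simp
  show ?thesis
    unfolding Phi_of_boundary_even faces bdW_Phi_even[OF assms(2)] Phi_e_b_unique[OF assms(1)]
    using rho_sum2_shift[OF assms(2)] by (simp add: algebra_simps)
qed


lemma Phi_o_face_not_unique:
  assumes "\<nexists>j0. even_gaps = {j0}"
  shows "Phi_o r (face m) j = 0"
proof (cases "even (face_gap m (q - 2))")
  case True
  moreover have "q - 2 < q - 1" using q_ge_2 by simp
  ultimately show ?thesis using Phi_o_face_eq_0[OF q_ge_2] by simp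
next
  case False
  text \<open>Exactly one of the two merged gaps is even; the even gap that must exist elsewhere
    lies in an unmerged position.\<close>
  then obtain x y where xy: "{x, y} = {m + (q - 2), m + (q - 1)}" "even (gap x)" "odd (gap y)"
    by (cases "even (gap (m + (q - 2)))") (auto simp: face_gap_def)
  have "x mod q \<in> even_gaps" using xy(2) even_gap_iff[of x] by simp
  moreover have "even_gaps \<noteq> {x mod q}" using assms by simp
  ultimately obtain t where t: "t \<in> even_gaps" "t \<noteq> x mod q" by auto
  obtain k where k: "k < q" "(m + k) mod q = t mod q" using exists_add_mod_eq[OF q_pos] .
  have "t < q" using t(1) unfolding even_gaps_def by simp
  then have "t \<noteq> y mod q" using t(1) xy(3) even_gap_iff[of y] by auto
  then have "m + k \<noteq> x" "m + k \<noteq> y" using t(2) k(2) \<open>t < q\<close> by auto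
  then have "m + k \<notin> {m + (q - 2), m + (q - 1)}" unfolding xy(1)[symmetric] by simp
  then have "k < q - 2" using k(1) by auto
  moreover have "even (gap (m + k))" using t(1) k(2) \<open>t < q\<close> by (simp add: even_gap_iff)
  ultimately show ?thesis using Phi_o_face_eq_0[OF q_ge_2, of k m] by (simp add: face_gap_def)
qed

lemma chain_map_even:
  assumes "j < r"
  shows "Phi_of_boundary r b j = bdW r q (Phi r b) j"
proof (cases "\<exists>j0. even_gaps = {j0}")
  case True
  then obtain j0 where "even_gaps = {j0}" ..
  then show ?thesis using chain_map_even_unique assms by simp
next
  case False
  have "card even_gaps \<noteq> 1"
  proof
    assume "card even_gaps = 1"
    then obtain j0 where "even_gaps = {j0}" by (rule card_1_singletonE)
    then show False using False by simp
  qed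
  moreover have "{j. even_entry r b j} = even_gaps" by (simp add: even_entry_b_iff)
  ultimately have "card {j. even_entry r b j} \<noteq> 1" by simp
  then have "Phi_e r b = (\<lambda>_. 0)" by (rule Phi_e_eq_0)
  then show ?thesis
    unfolding Phi_of_boundary_even bdW_Phi_even[OF assms] using Phi_o_face_not_unique[OF False] by simp
qed

end

section \<open>Generators of odd length\<close>

locale odd_generator = cyclic_generator +
  assumes odd_q: "odd q" and q_ge_3: "q \<ge> 3"
begin

lemma q_ge_2: "q \<ge> 2"
  using q_ge_3 by simp

lemma Phi_of_boundary_odd:
  "Phi_of_boundary r b j = norm_const r (q - 1) * (\<Sum>m<q. Phi_e r (face m) j)"
proof -
  have "(-1::rat) ^ i * (-1) ^ (i * q) = 1" for i
  proof -
    have "even (i + i * q)" using odd_q by simp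
    then show ?thesis by (simp flip: power_add)
  qed
  moreover have "Phi_cyc r (face m) j = norm_const r (q - 1) * Phi_e r (face m) j" for m
    using Phi_cyc_even[of "face m" r j] odd_q q_ge_2 by (simp add: length_face face_cyclically_ordered[OF q_ge_2, THEN cyclically_ordered_def[THEN iffD1]])
  ultimately have "Phi_of_boundary r b j = norm_const r (q - 1) * (\<Sum>i<q. Phi_e r (face (1 + i)) j)"
    unfolding Phi_of_boundary_faces[OF q_ge_2] by (simp add: sum_distrib_left)
  also have "(\<Sum>i<q. Phi_e r (face (1 + i)) j) = (\<Sum>m<q. Phi_e r (face m) j)"
    by (rule sum_shift_periodic) (simp add: face_add_q)
  finally show ?thesis .
qed

lemma bdW_Phi_odd:
  assumes "j < r"
  shows "bdW r q (Phi r b) j = norm_const r q * (\<Sum>k<r. Phi_o r b k)"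
proof -
  have "Phi r b k = norm_const r q * Phi_o r b k" for k
    using Phi_b_eq_Phi_cyc Phi_cyc_odd[OF odd_q] by simp
  then show ?thesis unfolding bdW_def using assms odd_q q_ge_3 b_ne by (simp add: sum_distrib_left)
qed


lemma sum_Phi_o_b_all_odd:
  assumes "even_gaps = {}"
  shows "(\<Sum>k<r. Phi_o r b k) = of_nat ((r - q) div 2)"
proof -
  have odd_gap: "odd (gap t)" for t using assms even_gap_iff[of t] by auto
  have "Phi_o r b k = (\<Sum>t<q. rho_sum2 r (Suc (vert t)) ((gap t - 1) div 2) k)" for k
  proof -
    have "\<forall>t. \<not> even_entry r b t" using assms by (simp add: even_entry_b_iff)
    moreover have "phi_o r (b ! t) (b ! ((t + 1) mod q)) k = rho_sum2 r (Suc (vert t)) ((gap t - 1) div 2) k"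
      if "t < q" for t
      using phi_o_vert[OF odd_gap, of t k] that by (simp add: vert_def)
    ultimately show ?thesis unfolding Phi_o_def by simp
  qed
  then have "(\<Sum>k<r. Phi_o r b k) = (\<Sum>t<q. \<Sum>k<r. rho_sum2 r (Suc (vert t)) ((gap t - 1) div 2) k)"
    by (simp add: sum.swap[of _ "{..<r}"])
  also have "\<dots> = of_nat (\<Sum>t<q. (gap t - 1) div 2)"
    using r_ge_3 by (simp add: sum_rho_sum2)
  finally have "(\<Sum>k<r. Phi_o r b k) = of_nat (\<Sum>t<q. (gap t - 1) div 2)" .
  moreover have "2 * (\<Sum>t<q. (gap t - 1) div 2) + q = r"
  proof -
    have "2 * ((gap t - 1) div 2) + 1 = gap t" for t using odd_gap[of t] by presburger
    then have "(\<Sum>t<q. 2 * ((gap t - 1) div 2) + 1) = r" using sum_gap[of 0] by simp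
    moreover have "(\<Sum>t<q. 2 * ((gap t - 1) div 2) + 1) = 2 * (\<Sum>t<q. (gap t - 1) div 2) + q"
      by (subst sum.distrib) (simp add: sum_distrib_left)
    ultimately show ?thesis by simp
  qed
  ultimately show ?thesis by (metis add_diff_cancel_right' nonzero_mult_div_cancel_left zero_neq_numeral)
qed

lemma Phi_e_face_all_odd:
  assumes "even_gaps = {}"
  shows "Phi_e r (face m) j = phi_e r (vert (m + (q - 2))) (vert (m + q)) j"
proof -
  have odd_gap: "odd (gap t)" for t using assms even_gap_iff[of t] by auto
  have "even (face_gap m k) \<longleftrightarrow> k = q - 2" if "k < q - 1" for k
    using that odd_gap by (auto simp: face_gap_def)
  then have "Phi_e r (face m) j = (-1) ^ (q - 2 + 1) * phi_e r (vert (m + (q - 2))) (vert m) j"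
    using Phi_e_face_single[OF q_ge_2, of "q - 2" m j] q_ge_2 by simp
  moreover have "(-1::rat) ^ (q - 2 + 1) = 1" using odd_q q_ge_3 by (simp add: neg_one_even_power)
  moreover have "vert m = vert (m + q)" by (simp add: vert_add_q)
  ultimately show ?thesis by simp
qed

lemma sum_Phi_e_faces_all_odd:
  assumes "even_gaps = {}" "j < r"
  shows "(\<Sum>m<q. Phi_e r (face m) j) = 1"
proof -
  have odd_gap: "odd (gap t)" for t using assms even_gap_iff[of t] by auto
  define F where "F x = phi_e r (vert x) (vert (Suc (Suc x))) j" for x
  define g where "g m = rho_sum2 r (Suc (vert m)) ((gap m - 1) div 2) j" for m
  have "Phi_e r (face m) j = F (q - 2 + m)" for m
  proof -
    have "q - 2 + m = m + (q - 2)" "Suc (Suc (q - 2 + m)) = m + q" using q_ge_2 by simp_all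
    then show ?thesis unfolding F_def Phi_e_face_all_odd[OF assms(1)] by (simp only:)
  qed
  then have "(\<Sum>m<q. Phi_e r (face m) j) = (\<Sum>m<q. F (q - 2 + m))" by simp
  also have "\<dots> = (\<Sum>m<q. F m)"
    by (rule sum_shift_periodic) (metis F_def add_Suc vert_add_q)
  also have "\<dots> = (\<Sum>m<q. rho_sum2 r (vert m) (Suc ((gap m - 1) div 2)) j) + (\<Sum>m<q. g (1 + m))"
    unfolding F_def g_def using phi_e_merge_odd_odd[OF q_ge_2 odd_gap odd_gap] phi_o_vert[OF odd_gap]
    by (simp add: sum.distrib)
  also have "(\<Sum>m<q. g (1 + m)) = (\<Sum>m<q. g m)"
    by (rule sum_shift_periodic) (simp add: g_def vert_add_q gap_add_q)
  also have "(\<Sum>m<q. rho_sum2 r (vert m) (Suc ((gap m - 1) div 2)) j) + (\<Sum>m<q. g m) =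
      (\<Sum>m<q. rho_sum r (Suc (vert m)) (gap m) j)"
  proof -
    have "Suc (2 * ((gap m - 1) div 2)) = gap m" for m using odd_gap[of m] by presburger
    then show ?thesis unfolding g_def by (simp add: sum.distrib[symmetric] rho_sum2_interleave)
  qed
  also have "\<dots> = rho_sum r (Suc (vert 0)) r j"
    using sum_rho_sum_gaps[where n = q and j = j] sum_gap[of 0] by simp
  also have "\<dots> = 1" using rho_sum_full[OF assms(2)] .
  finally show ?thesis .
qed

lemma chain_map_all_odd:
  assumes "even_gaps = {}" "j < r"
  shows "Phi_of_boundary r b j = bdW r q (Phi r b) j"
proof -
  have "r - q = 2 * ((r - q) div 2)" using odd_q odd_r by presburger
  moreover have "1 \<le> (r - q) div 2" using length_b odd_q odd_r by presburger
  ultimately have "norm_const r (q - 1) = of_nat ((r - q) div 2) * norm_const r q"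
    using q_ge_3 by (intro norm_const_pred_even_diff) auto
  then show ?thesis
    unfolding Phi_of_boundary_odd bdW_Phi_odd[OF assms(2)] sum_Phi_o_b_all_odd[OF assms(1)]
      sum_Phi_e_faces_all_odd[OF assms] by simp
qed

end


locale two_even_gaps = odd_generator +
  fixes u d :: nat
  assumes u_less: "u < q" and d_ge_1: "1 \<le> d" and d_le: "d \<le> q - 2"
    and even_gaps_eq: "even_gaps = {u, (u + d) mod q}"
begin

definition even_offset :: "nat \<Rightarrow> bool" where
  "even_offset s \<longleftrightarrow> s = 0 \<or> s = q \<or> s = d \<or> s = q + d"

lemma even_gap_offset_iff:
  assumes "s < 2 * q"
  shows "even (gap (u + s)) \<longleftrightarrow> even_offset s"
proof -
  have "(u + s) mod q = u \<longleftrightarrow> s mod q = 0"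
    using add_mod_eq_iff[of u s q 0] u_less by simp
  also have "\<dots> \<longleftrightarrow> s = 0 \<or> s = q" using mod_eq_iff_below_double[OF assms q_pos] by simp
  finally have "(u + s) mod q = u \<longleftrightarrow> s = 0 \<or> s = q" .
  moreover have "(u + s) mod q = (u + d) mod q \<longleftrightarrow> s mod q = d"
    using add_mod_eq_iff[of u s q d] d_le q_ge_3 by simp
  moreover have "s mod q = d \<longleftrightarrow> s = d \<or> s = q + d"
    using mod_eq_iff_below_double[OF assms, of d] d_le q_ge_3 by simp
  ultimately show ?thesis unfolding even_gap_iff even_gaps_eq even_offset_def by auto
qed

lemma even_face_gap_offset_iff:
  assumes "t < q" "k < q - 1"
  shows "even (face_gap (Suc u + t) k) \<longleftrightarrow>
    (if k < q - 2 then even_offset (Suc t + k) else (even_offset (t + (q - 1)) \<longleftrightarrow> even_offset (t + q)))"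
proof (cases "k < q - 2")
  case True
  have "Suc t + k < 2 * q" using True assms by linarith
  then show ?thesis using True even_gap_offset_iff[of "Suc t + k"] by (simp add: face_gap_def add.assoc)
next
  case False
  have "Suc u + t + (q - 2) = u + (t + (q - 1))" "Suc u + t + (q - 1) = u + (t + q)" using q_ge_2 by auto
  then have "face_gap (Suc u + t) k = gap (u + (t + (q - 1))) + gap (u + (t + q))"
    unfolding face_gap_def using False by (simp only: if_False)
  then show ?thesis
    using False assms even_gap_offset_iff[of "t + (q - 1)"] even_gap_offset_iff[of "t + q"] by simp
qed

lemma Phi_e_face_vanish:
  assumes "t < q" "t \<notin> {0, 1, d, d + 1}"
  shows "Phi_e r (face (Suc u + t)) j = 0"
proof -
  text \<open>Both the merged gap and the unmerged gap ending at \<open>vert (u + q)\<close> are even.\<close>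
  have k: "q - 2 < q - 1" "q - 1 - t < q - 1" "q - 1 - t < q - 2" "q - 2 \<noteq> q - 1 - t"
    using assms q_ge_3 by auto
  have "even (face_gap (Suc u + t) (q - 2))"
    using even_face_gap_offset_iff[OF assms(1) k(1)] assms d_le q_ge_3 unfolding even_offset_def by auto
  moreover have "even (face_gap (Suc u + t) (q - 1 - t))"
    using even_face_gap_offset_iff[OF assms(1) k(2)] k(3) assms unfolding even_offset_def by auto
  ultimately show ?thesis using Phi_e_face_two[OF q_ge_2 k(1,2,4)] by simp
qed

lemma sum_Phi_e_faces_eq_four:
  "(\<Sum>m<q. Phi_e r (face m) j) = (\<Sum>t\<in>{0, 1, d, d + 1}. Phi_e r (face (Suc u + t)) j)"
proof -
  have "(\<Sum>m<q. Phi_e r (face m) j) = (\<Sum>t<q. Phi_e r (face (Suc u + t)) j)"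
    by (rule sum_shift_periodic[symmetric]) (simp add: face_add_q)
  also have "\<dots> = (\<Sum>t\<in>{0, 1, d, d + 1}. Phi_e r (face (Suc u + t)) j)"
    using Phi_e_face_vanish d_le q_ge_3 by (intro sum.mono_neutral_right) auto
  finally show ?thesis .
qed


lemma sum_Phi_e_faces_adjacent:
  assumes "d = 1"
  shows "(\<Sum>m<q. Phi_e r (face m) j) = 0"
proof -
  have f0: "Phi_e r (face (Suc u)) j = - phi_e r (vert (Suc u)) (vert (Suc (Suc u))) j"
  proof -
    have "even (face_gap (Suc u + 0) k) \<longleftrightarrow> k = 0" if "k < q - 1" for k
      using even_face_gap_offset_iff[OF q_pos that] assms q_ge_3 unfolding even_offset_def by auto
    then show ?thesis using Phi_e_face_single_unmerged[OF q_ge_2, of 0 "Suc u" j] q_ge_3 by simp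
  qed
  have f1: "Phi_e r (face (Suc u + 1)) j = phi_e r (vert u) (vert (Suc (Suc u))) j"
  proof -
    have "1 < q" using q_ge_3 by simp
    then have "even (face_gap (Suc u + 1) k) \<longleftrightarrow> k = q - 2" if "k < q - 1" for k
      using even_face_gap_offset_iff[of 1 k] that assms q_ge_3 unfolding even_offset_def by auto
    then have "Phi_e r (face (Suc u + 1)) j =
        (-1) ^ (q - 2 + 1) * phi_e r (vert (Suc u + 1 + (q - 2))) (vert (Suc u + 1)) j"
      using Phi_e_face_single[OF q_ge_2, of "q - 2" "Suc u + 1" j] q_ge_3 by simp
    moreover have "Suc u + 1 + (q - 2) = u + q" using q_ge_3 by simp
    moreover have "(-1::rat) ^ (q - 2 + 1) = 1" using odd_q q_ge_3 by (simp add: neg_one_even_power)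
    ultimately show ?thesis by (simp only: vert_add_q mult_1) simp
  qed
  have f2: "Phi_e r (face (Suc u + 2)) j = - phi_e r (vert u) (vert (Suc u)) j"
  proof -
    have "2 < q" using q_ge_3 by simp
    then have "even (face_gap (Suc u + 2) k) \<longleftrightarrow> k = q - 3" if "k < q - 1" for k
      using even_face_gap_offset_iff[of 2 k] that assms q_ge_3 unfolding even_offset_def by auto
    then have "Phi_e r (face (Suc u + 2)) j =
        (-1) ^ (q - 3 + 1) * phi_e r (vert (Suc u + 2 + (q - 3))) (vert (Suc (Suc u + 2 + (q - 3)))) j"
      using Phi_e_face_single_unmerged[OF q_ge_2, of "q - 3" "Suc u + 2" j] q_ge_3 by simp
    moreover have "Suc u + 2 + (q - 3) = u + q" using q_ge_3 by simp
    moreover have "(-1::rat) ^ (q - 3 + 1) = -1" using odd_q q_ge_3 by (simp add: neg_one_odd_power)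
    moreover have "vert (Suc (u + q)) = vert (Suc u)" by (metis add_Suc vert_add_q)
    ultimately show ?thesis by (simp only: vert_add_q)
  qed
  have "even (gap u)" "even (gap (Suc u))"
    using even_gap_offset_iff[of 0] even_gap_offset_iff[of 1] assms q_pos q_ge_3 unfolding even_offset_def by auto
  then have "phi_e r (vert u) (vert (Suc (Suc u))) j =
      phi_e r (vert u) (vert (Suc u)) j + phi_e r (vert (Suc u)) (vert (Suc (Suc u))) j"
    by (rule phi_e_merge_even_even[OF q_ge_2])
  moreover have "{0, 1, d, d + 1} = {0, 1, 2::nat}" using assms by auto
  ultimately show ?thesis using f0 f1 f2 by (simp add: sum_Phi_e_faces_eq_four)
qed

lemma sum_Phi_e_faces_apart:
  assumes "d \<ge> 2"
  shows "(\<Sum>m<q. Phi_e r (face m) j) = 0"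
proof -
  define X where "X = phi_e r (vert (u + d)) (vert (Suc (u + d))) j"
  define Y where "Y = phi_e r (vert u) (vert (Suc u)) j"
  have t: "1 < q" "d < q" "d + 1 < q" using d_le q_ge_3 by auto
  have f0: "Phi_e r (face (Suc u + 0)) j = (-1) ^ (d - 1 + 1) * X"
  proof -
    have "even (face_gap (Suc u + 0) k) \<longleftrightarrow> k = d - 1" if "k < q - 1" for k
      using even_face_gap_offset_iff[OF q_pos that] assms d_le q_ge_3 unfolding even_offset_def by auto
    moreover have "Suc u + 0 + (d - 1) = u + d" using assms by simp
    ultimately show ?thesis
      using Phi_e_face_single_unmerged[OF q_ge_2, of "d - 1" "Suc u + 0" j] d_le unfolding X_def by simp
  qed
  have f1: "Phi_e r (face (Suc u + 1)) j = (-1) ^ (d - 2 + 1) * X"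
  proof -
    have iff: "even (face_gap (Suc u + 1) k) \<longleftrightarrow> k = d - 2" if "k < q - 1" for k
      using even_face_gap_offset_iff[OF t(1) that] assms d_le q_ge_3 unfolding even_offset_def by auto
    have "d - 2 < q - 2" using assms d_le q_ge_3 by linarith
    then have "Phi_e r (face (Suc u + 1)) j =
        (-1) ^ (d - 2 + 1) * phi_e r (vert (Suc u + 1 + (d - 2))) (vert (Suc (Suc u + 1 + (d - 2)))) j"
      using Phi_e_face_single_unmerged[OF q_ge_2 _ iff] by blast
    moreover have "Suc u + 1 + (d - 2) = u + d" using assms by simp
    ultimately show ?thesis unfolding X_def by (simp only:)
  qed
  have fd: "Phi_e r (face (Suc u + d)) j = (-1) ^ (q - 1 - d + 1) * Y"
  proof -
    have "even (face_gap (Suc u + d) k) \<longleftrightarrow> k = q - 1 - d" if "k < q - 1" for k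
      using even_face_gap_offset_iff[OF t(2) that] assms d_le q_ge_3 unfolding even_offset_def by auto
    moreover have "Suc u + d + (q - 1 - d) = u + q" using d_le q_ge_3 by simp
    moreover have "vert (Suc (u + q)) = vert (Suc u)" by (metis add_Suc vert_add_q)
    ultimately show ?thesis
      using Phi_e_face_single_unmerged[OF q_ge_2, of "q - 1 - d" "Suc u + d" j] assms d_le
      unfolding Y_def by (simp add: vert_add_q)
  qed
  have fd1: "Phi_e r (face (Suc u + (d + 1))) j = (-1) ^ (q - 2 - d + 1) * Y"
  proof -
    have "even (face_gap (Suc u + (d + 1)) k) \<longleftrightarrow> k = q - 2 - d" if "k < q - 1" for k
      using even_face_gap_offset_iff[OF t(3) that] assms d_le q_ge_3 unfolding even_offset_def by auto
    moreover have "Suc u + (d + 1) + (q - 2 - d) = u + q" using d_le q_ge_3 by simp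
    moreover have "vert (Suc (u + q)) = vert (Suc u)" by (metis add_Suc vert_add_q)
    ultimately show ?thesis
      using Phi_e_face_single_unmerged[OF q_ge_2, of "q - 2 - d" "Suc u + (d + 1)" j] assms d_le
      unfolding Y_def by (simp add: vert_add_q)
  qed
  have "(-1::rat) ^ (d - 1 + 1) + (-1) ^ (d - 2 + 1) = 0"
    using assms by (cases d) (auto simp: numeral_2_eq_2)
  moreover have "(-1::rat) ^ (q - 1 - d + 1) + (-1) ^ (q - 2 - d + 1) = 0"
  proof -
    have "q - 1 - d + 1 = Suc (q - 2 - d + 1)" using d_le q_ge_3 by simp
    then show ?thesis by simp
  qed
  ultimately have "Phi_e r (face (Suc u + 0)) j + Phi_e r (face (Suc u + 1)) j = 0"
    "Phi_e r (face (Suc u + d)) j + Phi_e r (face (Suc u + (d + 1))) j = 0"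
    unfolding f0 f1 fd fd1 by (simp_all flip: distrib_right)
  then show ?thesis using assms by (simp add: sum_Phi_e_faces_eq_four)
qed

lemma sum_Phi_e_faces_two_even_gaps: "(\<Sum>m<q. Phi_e r (face m) j) = 0"
  using sum_Phi_e_faces_adjacent sum_Phi_e_faces_apart d_ge_1 by (cases "d = 1") auto

end

context odd_generator
begin

lemma unique_even_face_gap:
  assumes "Phi_e r (face m) j \<noteq> 0"
  obtains k0 where "k0 < q - 1" "\<And>k. k < q - 1 \<Longrightarrow> even (face_gap m k) \<longleftrightarrow> k = k0"
proof -
  have "card {k. even_entry r (face m) k} = 1" using assms Phi_e_eq_0 by fastforce
  then obtain k0 where "{k. even_entry r (face m) k} = {k0}" by (rule card_1_singletonE)
  then have "k0 < q - 1" "\<And>k. k < q - 1 \<Longrightarrow> even (face_gap m k) \<longleftrightarrow> k = k0"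
    by (auto simp: even_entry_face_iff[OF q_ge_2] set_eq_iff)
  then show ?thesis by (rule that)
qed

lemma even_gap_offsets_merged:
  assumes "\<And>k. k < q - 1 \<Longrightarrow> even (face_gap m k) \<longleftrightarrow> k = q - 2"
  shows "{k. k < q \<and> even (gap (m + k))} = {} \<or> {k. k < q \<and> even (gap (m + k))} = {q - 2, q - 1}"
proof -
  have "q - 2 < q - 1" using q_ge_3 by simp
  from assms[OF this] have same: "even (gap (m + (q - 1))) \<longleftrightarrow> even (gap (m + (q - 2)))"
    by (auto simp: face_gap_def)
  have E: "k < q \<and> even (gap (m + k)) \<longleftrightarrow> (k = q - 2 \<or> k = q - 1) \<and> even (gap (m + (q - 2)))" for k
  proof (cases "k < q - 2")
    case True
    then show ?thesis using assms[of k] by (auto simp: face_gap_def)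
  next
    case False
    then have "k < q \<longleftrightarrow> k = q - 2 \<or> k = q - 1" using q_ge_3 by auto
    then show ?thesis using same by auto
  qed
  show ?thesis
  proof (cases "even (gap (m + (q - 2)))")
    case True
    then have "{k. k < q \<and> even (gap (m + k))} = {q - 2, q - 1}" by (intro set_eqI) (simp add: E)
    then show ?thesis ..
  next
    case False
    then have "{k. k < q \<and> even (gap (m + k))} = {}" by (simp add: E)
    then show ?thesis ..
  qed
qed

lemma even_gap_offsets_unmerged:
  assumes "k0 < q - 2" "\<And>k. k < q - 1 \<Longrightarrow> even (face_gap m k) \<longleftrightarrow> k = k0"
  obtains p where "p < q" "p \<noteq> k0" "{k. k < q \<and> even (gap (m + k))} = {k0, p}"
proof -
  have "q - 2 < q - 1" using q_ge_3 by simp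
  from assms(2)[OF this] have merged: "odd (gap (m + (q - 2)) + gap (m + (q - 1)))"
    using assms(1) by (auto simp: face_gap_def)
  define p where "p = (if even (gap (m + (q - 2))) then q - 2 else q - 1)"
  have "k < q \<and> even (gap (m + k)) \<longleftrightarrow> k = k0 \<or> k = p" for k
  proof (cases "k < q - 2")
    case True
    then show ?thesis using assms(2)[of k] q_ge_3 unfolding p_def by (auto simp: face_gap_def)
  next
    case False
    then have "k < q \<longleftrightarrow> k = q - 2 \<or> k = q - 1" using q_ge_3 by auto
    then show ?thesis using merged False assms(1) unfolding p_def by auto
  qed
  then have "{k. k < q \<and> even (gap (m + k))} = {k0, p}" by (intro set_eqI) simp
  moreover have "p < q" "p \<noteq> k0" using assms(1) q_ge_3 unfolding p_def by auto
  ultimately show ?thesis using that by blast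
qed

lemma even_gaps_if_Phi_e_face_nonzero:
  assumes "Phi_e r (face m) j \<noteq> 0"
  shows "even_gaps = {} \<or> (\<exists>x y. x \<noteq> y \<and> even_gaps = {x, y})"
proof -
  let ?E = "{k. k < q \<and> even (gap (m + k))}"
  obtain k0 where k0: "k0 < q - 1" and iff: "\<And>k. k < q - 1 \<Longrightarrow> even (face_gap m k) \<longleftrightarrow> k = k0"
    by (rule unique_even_face_gap[OF assms]) blast
  have "?E = {} \<or> (\<exists>k1 k2. k1 < q \<and> k2 < q \<and> k1 \<noteq> k2 \<and> ?E = {k1, k2})"
  proof (cases "k0 = q - 2")
    case True
    then have "?E = {} \<or> ?E = {q - 2, q - 1}" using even_gap_offsets_merged iff by simp
    moreover have "q - 2 < q" "q - 1 < q" "q - 2 \<noteq> q - 1" using q_ge_3 by auto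
    ultimately show ?thesis by blast
  next
    case False
    then have "k0 < q - 2" using k0 by linarith
    then obtain p where "p < q" "p \<noteq> k0" "?E = {k0, p}" by (rule even_gap_offsets_unmerged[OF _ iff])
    then show ?thesis using k0 by auto
  qed
  then show ?thesis
  proof
    assume "?E = {}"
    then show ?thesis using even_gaps_eq_image[of m] by simp
  next
    assume "\<exists>k1 k2. k1 < q \<and> k2 < q \<and> k1 \<noteq> k2 \<and> ?E = {k1, k2}"
    then obtain k1 k2 where k: "k1 < q" "k2 < q" "k1 \<noteq> k2" "?E = {k1, k2}" by blast
    then have "(m + k1) mod q \<noteq> (m + k2) mod q" using add_mod_cancel_left by blast
    then show ?thesis using even_gaps_eq_image[of m] k(4) by auto
  qed
qed

lemma chain_map_odd:
  assumes "j < r"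
  shows "Phi_of_boundary r b j = bdW r q (Phi r b) j"
proof (cases "even_gaps = {}")
  case True
  then show ?thesis using chain_map_all_odd assms by simp
next
  case False
  then obtain t where "even_entry r b t" by (auto simp: even_entry_b_iff)
  then have "Phi_o r b k = 0" for k unfolding Phi_o_def by auto
  then have rhs: "bdW r q (Phi r b) j = 0" using bdW_Phi_odd[OF assms] by simp
  have "(\<Sum>m<q. Phi_e r (face m) j) = 0"
  proof (cases "\<exists>x y. x \<noteq> y \<and> even_gaps = {x, y}")
    case True
    then obtain x y where xy: "x \<noteq> y" "even_gaps = {x, y}" by blast
    then have "x < q" "y < q" unfolding even_gaps_def by auto
    then obtain u d where "u < q" "1 \<le> d" "d \<le> q - 2" "even_gaps = {u, (u + d) mod q}"
      using pair_eq_shift_mod[of x q y] xy q_ge_3 by metis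
    then interpret two_even_gaps r b u d by unfold_locales
    show ?thesis by (rule sum_Phi_e_faces_two_even_gaps)
  next
    case no_pair: False
    then have "Phi_e r (face m) j = 0" for m using even_gaps_if_Phi_e_face_nonzero False by blast
    then show ?thesis by simp
  qed
  then show ?thesis unfolding Phi_of_boundary_odd rhs by simp
qed

end

context cyclic_generator
begin

lemma chain_map_cyclic: "Phi_of_boundary r b = bdW r q (Phi r b)"
proof
  fix j
  show "Phi_of_boundary r b j = bdW r q (Phi r b) j"
  proof (cases "j < r")
    case False
    then show ?thesis
      using Phi_eq_0_outside[of r j] r_ge_3 q_pos
      by (simp add: Phi_of_boundary_eq bdW_def)
  next
    case True
    have "q = 1 \<or> even q \<or> (odd q \<and> q \<ge> 3)" using q_pos by presburger
    then consider "q = 1" | "even q" | "odd q" "q \<ge> 3" by auto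
    then show ?thesis
    proof cases
      case 1
      then show ?thesis by (rule chain_map_singleton)
    next
      case 2
      then interpret even_generator r b by unfold_locales
      show ?thesis using True by (rule chain_map_even)
    next
      case 3
      then interpret odd_generator r b by unfold_locales
      show ?thesis using True by (rule chain_map_odd)
    qed
  qed
qed

end

theorem theorem5p1:
  fixes r :: nat and a :: "nat list"
  assumes "r \<ge> 3" and "odd r"
    and "distinct a" and "set a \<subseteq> {..<r}" and "length a \<le> r - 1"
  shows "Phi_of_boundary r a = bdW r (length a) (Phi r a)"
proof (rule chain_map_if_sorted[OF _ assms(3,4) refl])
  fix b assume b: "sorted_wrt (<) b" "set b \<subseteq> {..<r}" "length b = length a"
  show "Phi_of_boundary r b = bdW r (length a) (Phi r b)"
  proof (cases "b = []")
    case True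
    then show ?thesis using b(3) by (auto simp: Phi_of_boundary_def bdW_def)
  next
    case False
    then have "cyclically_ordered r b" using sorted_imp_cyclically_ordered b(1,2) by simp
    then interpret cyclic_generator r b using assms(1,2,5) b(2,3) by unfold_locales simp_all
    show ?thesis using chain_map_cyclic b(3) by simp
  qed
qed

end
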